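(* Let $\mathcal K$ be a 2-category, $(t,\mu,\eta)$ a monad on a 0-cell $k$ and $s:k\to k$ a 1-cell. There is a bijective correspondence between (i) monads in the 2-category $\mathrm{EM}^w(\mathcal K)$ on the 0-cell $(t,\mu,\eta)$ whose underlying 1-cell has first component $s$, i.e. triples consisting of a 1-cell $(s,\psi):t\to t$ of $\mathrm{EM}^w(\mathcal K)$, a multiplication 2-cell $\nu:(s,\psi)\circ(s,\psi)\Rightarrow(s,\psi)$ and a unit 2-cell $\vartheta:(k,t)\Rightarrow(s,\psi)$ in $\mathrm{EM}^w(\mathcal K)$ (so $\nu:ss\Rightarrow st$ and $\vartheta:k\Rightarrow st$ in $\mathcal K$) satisfying the monad axioms; and (ii) pre-monads $(st,\Theta,\vartheta)$ in $\mathcal K$ (with the same unit $\vartheta$) such that $\Theta\ast sts\mu=s\mu\ast\Theta t$.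
   Context: Conventions in a 2-category $\mathcal K$: horizontal composition and whiskering by juxtaposition in the order of functor composition; identity 1-cell of $k$ written $k$, identity 2-cell of $V$ written $V$; vertical composition $\ast$ with $\alpha\ast\beta$ meaning $\beta$ then $\alpha$. A monad $(t,\mu,\eta)$ on $k$: $t:k\to k$, $\mu:tt\Rightarrow t$, $\eta:k\Rightarrow t$ with $\mu\ast\mu t=\mu\ast t\mu$, $\mu\ast\eta t=t=\mu\ast t\eta$. A pre-monad is a triple $(m,M,e)$, $m:k\to k$, $M:mm\Rightarrow m$, $e:k\Rightarrow m$, with $M\ast Mm=M\ast mM$, $M\ast em=M\ast me$, $M\ast ee=e$, $M\ast Mm\ast emm=M$. The 2-category $\mathrm{EM}^w(\mathcal K)$: 0-cells are monads in $\mathcal K$; a 1-cell $(t,\mu,\eta)\to(t',\mu',\eta')$ ($t$ on $k$, $t'$ on $k'$) is $(V,\psi)$, $V:k\to k'$, $\psi:t'V\Rightarrow Vt$, with $V\mu\ast\psi t\ast t'\psi=\psi\ast\mu'V$; a 2-cell $(V,\psi)\Rightarrow(W,\phi)$ is $\varrho:V\Rightarrow Wt$ in $\mathcal K$ with $W\mu\ast\varrho t\ast\psi=W\mu\ast\phi t\ast t'\varrho$ and $\varrho=W\mu\ast\phi t\ast\eta'Wt\ast\varrho$. Identity 1-cell on $t$ is $(k,t)$; identity 2-cell on $(W,\phi)$ is $\phi\ast\eta'W$; horizontal composite of 1-cells $(V,\psi):t\to t'$, $(V',\psi'):t'\to t''$ is $(V'V,V'\psi\ast\psi'V)$, of 2-cells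 $\varrho:(V,\psi)\Rightarrow(W,\phi)$, $\varrho':(V',\psi')\Rightarrow(W',\phi')$ is $\varrho'\circ\varrho=W'W\mu\ast W'\varrho t\ast W'\psi\ast\varrho'V$; vertical composite of $\varrho$ and $\tau:(W,\phi)\Rightarrow(U,\theta)$ is $\tau\bullet\varrho=U\mu\ast\tau t\ast\varrho$. These data form a 2-category, in which monads (a 1-cell $m:t\to t$ with 2-cells $\nu:m\circ m\Rightarrow m$, $\vartheta:1_t\Rightarrow m$ satisfying associativity and unit laws w.r.t. $\circ$ and $\bullet$) are meant in (i). *)

theory Defs
  imports Main
begin

text \<open>A (strict) 2-category, presented as a partial algebra.
  Hom a b: 1-cells a to b; Cp g f: composite "g f" (f first);
  Cl f g: 2-cells f to g; V2 x y: vertical composite "x * y" (y first);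
  H2 x y: horizontal composite "x y" (order of functor composition).\<close>
record ('o, 'a, 'c) twocat =
  Obj :: "'o set"
  Hom :: "'o \<Rightarrow> 'o \<Rightarrow> 'a set"
  I1  :: "'o \<Rightarrow> 'a"
  Cp  :: "'a \<Rightarrow> 'a \<Rightarrow> 'a"
  Cl  :: "'a \<Rightarrow> 'a \<Rightarrow> 'c set"
  I2  :: "'a \<Rightarrow> 'c"
  V2  :: "'c \<Rightarrow> 'c \<Rightarrow> 'c"
  H2  :: "'c \<Rightarrow> 'c \<Rightarrow> 'c"

definition arr1 :: "('o, 'a, 'c) twocat \<Rightarrow> 'a \<Rightarrow> bool" where
  "arr1 C f \<longleftrightarrow> (\<exists>a b. f \<in> Hom C a b)"

definition two_category :: "('o, 'a, 'c) twocat \<Rightarrow> bool" where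
  "two_category C \<longleftrightarrow>
    (\<forall>a b. Hom C a b \<noteq> {} \<longrightarrow> a \<in> Obj C \<and> b \<in> Obj C) \<and>
    (\<forall>a b a' b' f. f \<in> Hom C a b \<longrightarrow> f \<in> Hom C a' b' \<longrightarrow> a = a' \<and> b = b') \<and>
    (\<forall>a \<in> Obj C. I1 C a \<in> Hom C a a) \<and>
    (\<forall>a b c f g. f \<in> Hom C a b \<longrightarrow> g \<in> Hom C b c \<longrightarrow> Cp C g f \<in> Hom C a c) \<and>
    (\<forall>a b c d f g h. f \<in> Hom C a b \<longrightarrow> g \<in> Hom C b c \<longrightarrow> h \<in> Hom C c d \<longrightarrow>
        Cp C h (Cp C g f) = Cp C (Cp C h g) f) \<and>
    (\<forall>a b f. f \<in> Hom C a b \<longrightarrow> Cp C (I1 C b) f = f \<and> Cp C f (I1 C a) = f) \<and>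
    (\<forall>f g. Cl C f g \<noteq> {} \<longrightarrow> (\<exists>a b. f \<in> Hom C a b \<and> g \<in> Hom C a b)) \<and>
    (\<forall>f g f' g' x. x \<in> Cl C f g \<longrightarrow> x \<in> Cl C f' g' \<longrightarrow> f = f' \<and> g = g') \<and>
    (\<forall>f. arr1 C f \<longrightarrow> I2 C f \<in> Cl C f f) \<and>
    (\<forall>f g h x y. x \<in> Cl C g h \<longrightarrow> y \<in> Cl C f g \<longrightarrow> V2 C x y \<in> Cl C f h) \<and>
    (\<forall>f g h i x y z. x \<in> Cl C h i \<longrightarrow> y \<in> Cl C g h \<longrightarrow> z \<in> Cl C f g \<longrightarrow>
        V2 C x (V2 C y z) = V2 C (V2 C x y) z) \<and>
    (\<forall>f g x. x \<in> Cl C f g \<longrightarrow> V2 C (I2 C g) x = x \<and> V2 C x (I2 C f) = x) \<and>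
    (\<forall>a b c f g f' g' x y. f \<in> Hom C b c \<longrightarrow> f' \<in> Hom C a b \<longrightarrow>
        x \<in> Cl C f g \<longrightarrow> y \<in> Cl C f' g' \<longrightarrow> H2 C x y \<in> Cl C (Cp C f f') (Cp C g g')) \<and>
    (\<forall>a b c d f g f' g' f'' g'' x y z. f \<in> Hom C c d \<longrightarrow> f' \<in> Hom C b c \<longrightarrow> f'' \<in> Hom C a b \<longrightarrow>
        x \<in> Cl C f g \<longrightarrow> y \<in> Cl C f' g' \<longrightarrow> z \<in> Cl C f'' g'' \<longrightarrow>
        H2 C x (H2 C y z) = H2 C (H2 C x y) z) \<and>
    (\<forall>a b f g x. f \<in> Hom C a b \<longrightarrow> x \<in> Cl C f g \<longrightarrow>
        H2 C (I2 C (I1 C b)) x = x \<and> H2 C x (I2 C (I1 C a)) = x) \<and>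
    (\<forall>a b c f f'. f \<in> Hom C b c \<longrightarrow> f' \<in> Hom C a b \<longrightarrow>
        H2 C (I2 C f) (I2 C f') = I2 C (Cp C f f')) \<and>
    (\<forall>a b c f g h f' g' h' x y z w. f \<in> Hom C b c \<longrightarrow> f' \<in> Hom C a b \<longrightarrow>
        x \<in> Cl C g h \<longrightarrow> y \<in> Cl C f g \<longrightarrow> z \<in> Cl C g' h' \<longrightarrow> w \<in> Cl C f' g' \<longrightarrow>
        H2 C (V2 C x y) (V2 C z w) = V2 C (H2 C x z) (H2 C y w))"

definition monad2 :: "('o, 'a, 'c) twocat \<Rightarrow> 'o \<Rightarrow> 'a \<Rightarrow> 'c \<Rightarrow> 'c \<Rightarrow> bool" where
  "monad2 C k t mu eta \<longleftrightarrow>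
    k \<in> Obj C \<and> t \<in> Hom C k k \<and> mu \<in> Cl C (Cp C t t) t \<and> eta \<in> Cl C (I1 C k) t \<and>
    V2 C mu (H2 C mu (I2 C t)) = V2 C mu (H2 C (I2 C t) mu) \<and>
    V2 C mu (H2 C eta (I2 C t)) = I2 C t \<and>
    V2 C mu (H2 C (I2 C t) eta) = I2 C t"

definition pre_monad :: "('o, 'a, 'c) twocat \<Rightarrow> 'o \<Rightarrow> 'a \<Rightarrow> 'c \<Rightarrow> 'c \<Rightarrow> bool" where
  "pre_monad C k m M e \<longleftrightarrow>
    m \<in> Hom C k k \<and> M \<in> Cl C (Cp C m m) m \<and> e \<in> Cl C (I1 C k) m \<and>
    V2 C M (H2 C M (I2 C m)) = V2 C M (H2 C (I2 C m) M) \<and>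
    V2 C M (H2 C e (I2 C m)) = V2 C M (H2 C (I2 C m) e) \<and>
    V2 C M (H2 C e e) = e \<and>
    V2 C M (V2 C (H2 C M (I2 C m)) (H2 C e (I2 C (Cp C m m)))) = M"

text \<open>1-cells (V, psi) : (t,mu,eta) -> (t',mu',eta') of EM^w(K), t on k, t' on k'.\<close>
definition em_1cell :: "('o, 'a, 'c) twocat \<Rightarrow> 'o \<Rightarrow> 'a \<Rightarrow> 'c \<Rightarrow> 'o \<Rightarrow> 'a \<Rightarrow> 'c \<Rightarrow> 'a \<Rightarrow> 'c \<Rightarrow> bool" where
  "em_1cell C k t mu k' t' mu' V psi \<longleftrightarrow>
    V \<in> Hom C k k' \<and> psi \<in> Cl C (Cp C t' V) (Cp C V t) \<and>
    V2 C (H2 C (I2 C V) mu) (V2 C (H2 C psi (I2 C t)) (H2 C (I2 C t') psi))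
      = V2 C psi (H2 C mu' (I2 C V))"

text \<open>2-cells rho : (V, psi) => (W, phi) of EM^w(K), where t (with mu) is the source
  monad and t' (with unit eta') the target monad.\<close>
definition em_2cell :: "('o, 'a, 'c) twocat \<Rightarrow> 'a \<Rightarrow> 'c \<Rightarrow> 'a \<Rightarrow> 'c \<Rightarrow>
    'a \<Rightarrow> 'c \<Rightarrow> 'a \<Rightarrow> 'c \<Rightarrow> 'c \<Rightarrow> bool" where
  "em_2cell C t mu t' eta' V psi W phi rho \<longleftrightarrow>
    rho \<in> Cl C V (Cp C W t) \<and>
    V2 C (H2 C (I2 C W) mu) (V2 C (H2 C rho (I2 C t)) psi)
      = V2 C (H2 C (I2 C W) mu) (V2 C (H2 C phi (I2 C t)) (H2 C (I2 C t') rho)) \<and>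
    rho = V2 C (H2 C (I2 C W) mu) (V2 C (H2 C phi (I2 C t))
            (V2 C (H2 C eta' (I2 C (Cp C W t))) rho))"

text \<open>Horizontal composite rho' o rho of rho : (V,psi) => (W,phi) and
  rho' : (V',psi') => (W',phi'); mu is the multiplication of the source monad t of rho.\<close>
definition em_hcomp2 :: "('o, 'a, 'c) twocat \<Rightarrow> 'a \<Rightarrow> 'c \<Rightarrow> 'a \<Rightarrow> 'c \<Rightarrow> 'a \<Rightarrow> 'a \<Rightarrow> 'c \<Rightarrow> 'c \<Rightarrow> 'c" where
  "em_hcomp2 C t mu V psi W W' rho rho' =
    V2 C (H2 C (I2 C (Cp C W' W)) mu)
     (V2 C (H2 C (H2 C (I2 C W') rho) (I2 C t))
      (V2 C (H2 C (I2 C W') psi) (H2 C rho' (I2 C V))))"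

definition em_vcomp2 :: "('o, 'a, 'c) twocat \<Rightarrow> 'a \<Rightarrow> 'c \<Rightarrow> 'a \<Rightarrow> 'c \<Rightarrow> 'c \<Rightarrow> 'c" where
  "em_vcomp2 C t mu U tau rho = V2 C (H2 C (I2 C U) mu) (V2 C (H2 C tau (I2 C t)) rho)"

text \<open>Identity 2-cell on (W, phi), eta' the unit of the target monad.\<close>
definition em_id2 :: "('o, 'a, 'c) twocat \<Rightarrow> 'c \<Rightarrow> 'a \<Rightarrow> 'c \<Rightarrow> 'c" where
  "em_id2 C eta' W phi = V2 C phi (H2 C eta' (I2 C W))"

text \<open>Horizontal composite of 1-cells (V,psi) then (V',psi'): second component.\<close>
definition em_comp1 :: "('o, 'a, 'c) twocat \<Rightarrow> 'a \<Rightarrow> 'c \<Rightarrow> 'a \<Rightarrow> 'c \<Rightarrow> 'c" where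
  "em_comp1 C V psi V' psi' = V2 C (H2 C (I2 C V') psi) (H2 C psi' (I2 C V))"

text \<open>(i): monads ((s,psi), nu, theta) in EM^w(K) on the 0-cell (t,mu,eta), recorded
  as triples (psi, nu, theta).\<close>
definition em_monads :: "('o, 'a, 'c) twocat \<Rightarrow> 'o \<Rightarrow> 'a \<Rightarrow> 'c \<Rightarrow> 'c \<Rightarrow> 'a \<Rightarrow> ('c \<times> 'c \<times> 'c) set" where
  "em_monads C k t mu eta s = {(psi, nu, th).
     em_1cell C k t mu k t mu s psi \<and>
     (let ss = Cp C s s; psi2 = em_comp1 C s psi s psi; i = em_id2 C eta s psi in
      em_2cell C t mu t eta ss psi2 s psi nu \<and>
      em_2cell C t mu t eta (I1 C k) (I2 C t) s psi th \<and>
      em_vcomp2 C t mu s nu (em_hcomp2 C t mu s psi s s i nu)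
        = em_vcomp2 C t mu s nu (em_hcomp2 C t mu ss psi2 s s nu i) \<and>
      em_vcomp2 C t mu s nu (em_hcomp2 C t mu s psi s s i th) = i \<and>
      em_vcomp2 C t mu s nu (em_hcomp2 C t mu (I1 C k) (I2 C t) s s th i) = i)}"

text \<open>(ii): pre-monads (st, Theta, theta) with Theta * sts mu = s mu * Theta t,
  recorded as pairs (Theta, theta).\<close>
definition st_premonads :: "('o, 'a, 'c) twocat \<Rightarrow> 'o \<Rightarrow> 'a \<Rightarrow> 'c \<Rightarrow> 'a \<Rightarrow> ('c \<times> 'c) set" where
  "st_premonads C k t mu s = {(Th, th).
     pre_monad C k (Cp C s t) Th th \<and>
     V2 C Th (H2 C (I2 C (Cp C s (Cp C t s))) mu) = V2 C (H2 C (I2 C s) mu) (H2 C Th (I2 C t))}"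

end

theory Submission
  imports Defs
begin

text \<open>
  From a monad \<open>((s, \<psi>), \<nu>, \<vartheta>)\<close> in \<open>EM\<^sup>w(K)\<close> one builds the multiplication
  \<open>\<Theta> = s\<mu> * s\<mu>t * \<nu>tt * s\<psi>t\<close> of a pre-monad \<open>(st, \<Theta>, \<vartheta>)\<close>; conversely
  \<open>\<psi> = \<Theta> * (s\<mu> * \<vartheta>t)(s\<eta>)\<close> and \<open>\<nu> = \<Theta> * (s\<eta>)(s\<eta>)\<close> are recovered from
  \<open>(\<Theta>, \<vartheta>)\<close>, and the two constructions are mutually inverse. Every axiom to be checked
  is an equation between pasting composites of \<open>\<mu>, \<eta>, \<psi>, \<nu>, \<vartheta>, \<Theta>\<close> on the
  0-cell \<open>k\<close>, so it is a statement about string diagrams: the two sides are flattened into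
  sequences of whiskered generators, and each equation is derived from the hypotheses and from
  previously derived equations by rewriting both sides, modulo the interchange law, to a common
  normal form. The rewriting is proved sound once and for all, and each derivation is then checked
  by evaluation.
\<close>

section \<open>Two-cells on a single 0-cell\<close>

lemma two_categoryD:
  assumes "two_category C"
  shows "\<forall>a b a' b' f. f \<in> Hom C a b \<longrightarrow> f \<in> Hom C a' b' \<longrightarrow> a = a' \<and> b = b'"
    and "\<forall>a \<in> Obj C. I1 C a \<in> Hom C a a"
    and "\<forall>a b c f g. f \<in> Hom C a b \<longrightarrow> g \<in> Hom C b c \<longrightarrow> Cp C g f \<in> Hom C a c"
    and "\<forall>a b c d f g h. f \<in> Hom C a b \<longrightarrow> g \<in> Hom C b c \<longrightarrow> h \<in> Hom C c d \<longrightarrow>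
        Cp C h (Cp C g f) = Cp C (Cp C h g) f"
    and "\<forall>a b f. f \<in> Hom C a b \<longrightarrow> Cp C (I1 C b) f = f \<and> Cp C f (I1 C a) = f"
    and "\<forall>f g. Cl C f g \<noteq> {} \<longrightarrow> (\<exists>a b. f \<in> Hom C a b \<and> g \<in> Hom C a b)"
    and "\<forall>f. arr1 C f \<longrightarrow> I2 C f \<in> Cl C f f"
    and "\<forall>f g h x y. x \<in> Cl C g h \<longrightarrow> y \<in> Cl C f g \<longrightarrow> V2 C x y \<in> Cl C f h"
    and "\<forall>f g h i x y z. x \<in> Cl C h i \<longrightarrow> y \<in> Cl C g h \<longrightarrow> z \<in> Cl C f g \<longrightarrow>
        V2 C x (V2 C y z) = V2 C (V2 C x y) z"
    and "\<forall>f g x. x \<in> Cl C f g \<longrightarrow> V2 C (I2 C g) x = x \<and> V2 C x (I2 C f) = x"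
    and "\<forall>a b c f g f' g' x y. f \<in> Hom C b c \<longrightarrow> f' \<in> Hom C a b \<longrightarrow>
        x \<in> Cl C f g \<longrightarrow> y \<in> Cl C f' g' \<longrightarrow> H2 C x y \<in> Cl C (Cp C f f') (Cp C g g')"
    and "\<forall>a b c d f g f' g' f'' g'' x y z. f \<in> Hom C c d \<longrightarrow> f' \<in> Hom C b c \<longrightarrow> f'' \<in> Hom C a b \<longrightarrow>
        x \<in> Cl C f g \<longrightarrow> y \<in> Cl C f' g' \<longrightarrow> z \<in> Cl C f'' g'' \<longrightarrow>
        H2 C x (H2 C y z) = H2 C (H2 C x y) z"
    and "\<forall>a b f g x. f \<in> Hom C a b \<longrightarrow> x \<in> Cl C f g \<longrightarrow>
        H2 C (I2 C (I1 C b)) x = x \<and> H2 C x (I2 C (I1 C a)) = x"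
    and "\<forall>a b c f f'. f \<in> Hom C b c \<longrightarrow> f' \<in> Hom C a b \<longrightarrow>
        H2 C (I2 C f) (I2 C f') = I2 C (Cp C f f')"
    and "\<forall>a b c f g h f' g' h' x y z w. f \<in> Hom C b c \<longrightarrow> f' \<in> Hom C a b \<longrightarrow>
        x \<in> Cl C g h \<longrightarrow> y \<in> Cl C f g \<longrightarrow> z \<in> Cl C g' h' \<longrightarrow> w \<in> Cl C f' g' \<longrightarrow>
        H2 C (V2 C x y) (V2 C z w) = V2 C (H2 C x z) (H2 C y w)"
  using assms unfolding two_category_def by simp_all

locale endo_two_category =
  fixes C :: "('o, 'a, 'c) twocat" and k :: 'o
  assumes two_cat: "two_category C" and obj: "k \<in> Obj C"
begin

abbreviation End :: "'a set" where "End \<equiv> Hom C k k"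

lemma comp_in_End: "f \<in> End \<Longrightarrow> g \<in> End \<Longrightarrow> Cp C g f \<in> End"
  using two_categoryD(3)[OF two_cat] by blast

lemma id_in_End: "I1 C k \<in> End"
  using two_categoryD(2)[OF two_cat] obj by blast

lemma comp_assoc: "f \<in> End \<Longrightarrow> g \<in> End \<Longrightarrow> h \<in> End \<Longrightarrow> Cp C (Cp C h g) f = Cp C h (Cp C g f)"
  using two_categoryD(4)[OF two_cat] by simp

lemma comp_id_left: "f \<in> End \<Longrightarrow> Cp C (I1 C k) f = f"
  using two_categoryD(5)[OF two_cat] by blast

lemma comp_id_right: "f \<in> End \<Longrightarrow> Cp C f (I1 C k) = f"
  using two_categoryD(5)[OF two_cat] by blast

lemma cell_cod_in_End: assumes "x \<in> Cl C f g" "f \<in> End" shows "g \<in> End"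
proof -
  from assms two_categoryD(6)[OF two_cat] obtain a b where "f \<in> Hom C a b" "g \<in> Hom C a b" by blast
  with assms two_categoryD(1)[OF two_cat] show ?thesis by blast
qed

lemma id2_cell: "f \<in> End \<Longrightarrow> I2 C f \<in> Cl C f f"
  using two_categoryD(7)[OF two_cat] unfolding arr1_def by blast

lemma vcomp_cell: "x \<in> Cl C g h \<Longrightarrow> y \<in> Cl C f g \<Longrightarrow> V2 C x y \<in> Cl C f h"
  using two_categoryD(8)[OF two_cat] by blast

lemma vcomp_assoc: "x \<in> Cl C h i \<Longrightarrow> y \<in> Cl C g h \<Longrightarrow> z \<in> Cl C f g \<Longrightarrow>
    V2 C (V2 C x y) z = V2 C x (V2 C y z)"
  using two_categoryD(9)[OF two_cat] by simp

lemma vcomp_id_left: "x \<in> Cl C f g \<Longrightarrow> V2 C (I2 C g) x = x"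
  using two_categoryD(10)[OF two_cat] by blast

lemma vcomp_id_right: "x \<in> Cl C f g \<Longrightarrow> V2 C x (I2 C f) = x"
  using two_categoryD(10)[OF two_cat] by blast

lemma hcomp_cell: "x \<in> Cl C f g \<Longrightarrow> y \<in> Cl C f' g' \<Longrightarrow> f \<in> End \<Longrightarrow> f' \<in> End \<Longrightarrow>
    H2 C x y \<in> Cl C (Cp C f f') (Cp C g g')"
  using two_categoryD(11)[OF two_cat] by blast

lemma hcomp_assoc: "x \<in> Cl C f g \<Longrightarrow> y \<in> Cl C f' g' \<Longrightarrow> z \<in> Cl C f'' g'' \<Longrightarrow>
    f \<in> End \<Longrightarrow> f' \<in> End \<Longrightarrow> f'' \<in> End \<Longrightarrow> H2 C (H2 C x y) z = H2 C x (H2 C y z)"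
  using two_categoryD(12)[OF two_cat] by simp

lemma hcomp_id_left: "x \<in> Cl C f g \<Longrightarrow> f \<in> End \<Longrightarrow> H2 C (I2 C (I1 C k)) x = x"
  using two_categoryD(13)[OF two_cat] by blast

lemma hcomp_id_right: "x \<in> Cl C f g \<Longrightarrow> f \<in> End \<Longrightarrow> H2 C x (I2 C (I1 C k)) = x"
  using two_categoryD(13)[OF two_cat] by blast

lemma hcomp_id2: "f \<in> End \<Longrightarrow> f' \<in> End \<Longrightarrow> H2 C (I2 C f) (I2 C f') = I2 C (Cp C f f')"
  using two_categoryD(14)[OF two_cat] by blast

lemma interchange_law: "x \<in> Cl C g h \<Longrightarrow> y \<in> Cl C f g \<Longrightarrow> z \<in> Cl C g' h' \<Longrightarrow> w \<in> Cl C f' g' \<Longrightarrow>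
    f \<in> End \<Longrightarrow> f' \<in> End \<Longrightarrow> H2 C (V2 C x y) (V2 C z w) = V2 C (H2 C x z) (H2 C y w)"
  using two_categoryD(15)[OF two_cat] by blast

lemma whisker_left_vcomp:
  assumes "x \<in> Cl C g h" "y \<in> Cl C f g" "f \<in> End" "a \<in> End"
  shows "H2 C (I2 C a) (V2 C x y) = V2 C (H2 C (I2 C a) x) (H2 C (I2 C a) y)"
proof -
  have "H2 C (I2 C a) (V2 C x y) = H2 C (V2 C (I2 C a) (I2 C a)) (V2 C x y)"
    using vcomp_id_left[OF id2_cell[OF assms(4)]] by simp
  also have "\<dots> = V2 C (H2 C (I2 C a) x) (H2 C (I2 C a) y)"
    using interchange_law[OF id2_cell id2_cell assms(1,2)] assms(3,4) by simp
  finally show ?thesis .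
qed

lemma whisker_right_vcomp:
  assumes "x \<in> Cl C g h" "y \<in> Cl C f g" "f \<in> End" "b \<in> End"
  shows "H2 C (V2 C x y) (I2 C b) = V2 C (H2 C x (I2 C b)) (H2 C y (I2 C b))"
proof -
  have "H2 C (V2 C x y) (I2 C b) = H2 C (V2 C x y) (V2 C (I2 C b) (I2 C b))"
    using vcomp_id_left[OF id2_cell[OF assms(4)]] by simp
  also have "\<dots> = V2 C (H2 C x (I2 C b)) (H2 C y (I2 C b))"
    using interchange_law[OF assms(1,2) id2_cell id2_cell] assms(3,4) by simp
  finally show ?thesis .
qed

lemma hcomp_right_first:
  assumes "x \<in> Cl C p p'" "y \<in> Cl C q q'" "p \<in> End" "q \<in> End"
  shows "H2 C x y = V2 C (H2 C x (I2 C q')) (H2 C (I2 C p) y)"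
proof -
  have "q' \<in> End" using cell_cod_in_End assms by blast
  then have "V2 C (H2 C x (I2 C q')) (H2 C (I2 C p) y) = H2 C (V2 C x (I2 C p)) (V2 C (I2 C q') y)"
    using interchange_law[OF assms(1) id2_cell id2_cell assms(2)] assms by simp
  then show ?thesis using assms by (simp add: vcomp_id_left vcomp_id_right)
qed

lemma hcomp_left_first:
  assumes "x \<in> Cl C p p'" "y \<in> Cl C q q'" "p \<in> End" "q \<in> End"
  shows "H2 C x y = V2 C (H2 C (I2 C p') y) (H2 C x (I2 C q))"
proof -
  have "p' \<in> End" using cell_cod_in_End assms by blast
  then have "V2 C (H2 C (I2 C p') y) (H2 C x (I2 C q)) = H2 C (V2 C (I2 C p') x) (V2 C y (I2 C q))"
    using interchange_law[OF id2_cell assms(1,2) id2_cell] assms by simp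
  then show ?thesis using assms by (simp add: vcomp_id_left vcomp_id_right)
qed

end

section \<open>String diagrams\<close>

text \<open>
  A word \<open>[x\<^sub>1, \<dots>, x\<^sub>n]\<close> stands for the composite 1-cell \<open>x\<^sub>1 \<dots> x\<^sub>n\<close> of
  \<open>s\<close> and \<open>t\<close>; a layer \<open>(a, g, b)\<close> is the generator \<open>g\<close> whiskered by \<open>a\<close> on
  the left and by \<open>b\<close> on the right, and a diagram lists its layers from the last applied to the
  first.
\<close>

datatype letter = S | T

datatype gen = Mu | Eta | Psi | Nu | Vartheta | Theta

fun gen_dom :: "gen \<Rightarrow> letter list" where
  "gen_dom Mu = [T, T]" | "gen_dom Eta = []" | "gen_dom Psi = [T, S]" | "gen_dom Nu = [S, S]"
| "gen_dom Vartheta = []" | "gen_dom Theta = [S, T, S, T]"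

fun gen_cod :: "gen \<Rightarrow> letter list" where
  "gen_cod Mu = [T]" | "gen_cod Eta = [T]" | "gen_cod Psi = [S, T]" | "gen_cod Nu = [S, T]"
| "gen_cod Vartheta = [S, T]" | "gen_cod Theta = [S, T]"

type_synonym layer = "letter list \<times> gen \<times> letter list"

fun layer_dom :: "layer \<Rightarrow> letter list" where
  "layer_dom (a, g, b) = a @ gen_dom g @ b"

fun layer_cod :: "layer \<Rightarrow> letter list" where
  "layer_cod (a, g, b) = a @ gen_cod g @ b"

fun diag_cod :: "letter list \<Rightarrow> layer list \<Rightarrow> letter list" where
  "diag_cod w [] = w"
| "diag_cod w (l # ls) = layer_cod l"

fun diag_wf :: "letter list \<Rightarrow> layer list \<Rightarrow> bool" where
  "diag_wf w [] = True"
| "diag_wf w (l # ls) = (layer_dom l = diag_cod w ls \<and> diag_wf w ls)"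

fun whisker :: "letter list \<Rightarrow> letter list \<Rightarrow> layer \<Rightarrow> layer" where
  "whisker a b (a', g, b') = (a @ a', g, b' @ b)"

lemma diag_cod_append: "diag_cod w (xs @ ys) = diag_cod (diag_cod w ys) xs"
  by (cases xs) auto

lemma diag_wf_append: "diag_wf w (xs @ ys) \<longleftrightarrow> diag_wf w ys \<and> diag_wf (diag_cod w ys) xs"
  by (induction xs) (auto simp: diag_cod_append)

lemma diag_wf_whisker:
  "diag_wf w ls \<Longrightarrow>
    diag_wf (a @ w @ b) (map (whisker a b) ls) \<and> diag_cod (a @ w @ b) (map (whisker a b) ls) = a @ diag_cod w ls @ b"
proof (induction ls)
  case (Cons l ls)
  then show ?case by (cases l; cases ls) auto
qed simp

lemma diag_wf_last: "diag_wf w ls \<Longrightarrow> ls \<noteq> [] \<Longrightarrow> layer_dom (last ls) = w"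
proof (induction ls)
  case (Cons l ls)
  then show ?case by (cases ls) auto
qed simp

datatype nf_mode = Left_first | Right_first

text \<open>
  Two adjacent layers whose generators occupy disjoint parts of the word commute. In mode
  \<open>Left_first\<close> they are swapped when the upper generator lies left of the lower one, in mode
  \<open>Right_first\<close> in the opposite situation.
\<close>

fun interchange :: "nf_mode \<Rightarrow> layer \<Rightarrow> layer \<Rightarrow> (layer \<times> layer) option" where
  "interchange Left_first (a1, g1, b1) (a2, g2, b2) =
    (let n = length a1 + length (gen_dom g1) in
     if n \<le> length a2
     then Some ((a1 @ gen_cod g1 @ drop n a2, g2, b2), (a1, g1, drop n a2 @ gen_dom g2 @ b2))
     else None)"
| "interchange Right_first (a1, g1, b1) (a2, g2, b2) =
    (let n = length a2 + length (gen_cod g2) in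
     if n \<le> length a1
     then Some ((a2, g2, drop n a1 @ gen_cod g1 @ b1), (a2 @ gen_dom g2 @ drop n a1, g1, b1))
     else None)"

lemma interchange_shape:
  assumes "interchange m l1 l2 = Some (u, d)" "layer_dom l1 = layer_cod l2"
  obtains a g c g' b where
      "l1 = (a, g, c @ gen_cod g' @ b)" "l2 = (a @ gen_dom g @ c, g', b)"
      "u = (a @ gen_cod g @ c, g', b)" "d = (a, g, c @ gen_dom g' @ b)"
    | a g c g' b where
      "u = (a, g, c @ gen_cod g' @ b)" "d = (a @ gen_dom g @ c, g', b)"
      "l1 = (a @ gen_cod g @ c, g', b)" "l2 = (a, g, c @ gen_dom g' @ b)"
proof -
  obtain a1 g1 b1 a2 g2 b2 where l: "l1 = (a1, g1, b1)" "l2 = (a2, g2, b2)"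
    by (cases l1, cases l2)
  have eq: "a1 @ gen_dom g1 @ b1 = a2 @ gen_cod g2 @ b2" using assms(2) l by simp
  show thesis
  proof (cases m)
    case Left_first
    let ?n = "length a1 + length (gen_dom g1)"
    have le: "?n \<le> length a2" and ud: "u = (a1 @ gen_cod g1 @ drop ?n a2, g2, b2)"
        "d = (a1, g1, drop ?n a2 @ gen_dom g2 @ b2)"
      using assms(1) l Left_first by (auto simp: Let_def split: if_splits)
    have "take ?n a2 = a1 @ gen_dom g1"
      using arg_cong[OF eq, of "take ?n"] le by simp
    then have a2: "a2 = a1 @ gen_dom g1 @ drop ?n a2"
      by (metis append.assoc append_take_drop_id)
    have "b1 = drop ?n a2 @ gen_cod g2 @ b2"
      using arg_cong[OF eq, of "drop ?n"] le by simp
    with a2 show thesis using that(1)[of a1 g1 "drop ?n a2" g2 b2] l ud by simp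
  next
    case Right_first
    let ?n = "length a2 + length (gen_cod g2)"
    have le: "?n \<le> length a1" and ud: "u = (a2, g2, drop ?n a1 @ gen_cod g1 @ b1)"
        "d = (a2 @ gen_dom g2 @ drop ?n a1, g1, b1)"
      using assms(1) l Right_first by (auto simp: Let_def split: if_splits)
    have "take ?n a1 = a2 @ gen_cod g2"
      using arg_cong[OF eq, of "take ?n"] le by simp
    then have a1: "a1 = a2 @ gen_cod g2 @ drop ?n a1"
      by (metis append.assoc append_take_drop_id)
    have "b2 = drop ?n a1 @ gen_dom g1 @ b1"
      using arg_cong[OF eq, of "drop ?n"] le by simp
    with a1 show thesis using that(2)[of a2 g2 "drop ?n a1" g1 b1] l ud by simp
  qed
qed

fun interchange_pass :: "nf_mode \<Rightarrow> layer list \<Rightarrow> layer list" where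
  "interchange_pass m (l1 # l2 # r) =
    (case interchange m l1 l2 of
       Some (u, d) \<Rightarrow> u # interchange_pass m (d # r)
     | None \<Rightarrow> l1 # interchange_pass m (l2 # r))"
| "interchange_pass m ls = ls"

fun normalize_iter :: "nf_mode \<Rightarrow> nat \<Rightarrow> layer list \<Rightarrow> layer list" where
  "normalize_iter m 0 ls = ls"
| "normalize_iter m (Suc n) ls =
    (let ls' = interchange_pass m ls in if ls' = ls then ls else normalize_iter m n ls')"

text \<open>The fuel only bounds the number of passes; soundness does not depend on reaching a fixed point.\<close>

definition normalize_diag :: "nf_mode \<Rightarrow> layer list \<Rightarrow> layer list" where
  "normalize_diag m ls = normalize_iter m (length ls * length ls + 1) ls"

text \<open>The whiskering of a candidate occurrence of \<open>L\<close> is read off its first layer.\<close>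

fun match_at :: "layer list \<Rightarrow> layer list \<Rightarrow> layer list \<Rightarrow> layer list option" where
  "match_at [] R ls = None"
| "match_at (l0 # L) R [] = None"
| "match_at ((a0, g0, b0) # L) R ((a1, g1, b1) # ls) =
    (let a = take (length a1 - length a0) a1; b = drop (length b0) b1;
         LL = (a0, g0, b0) # L; ll = (a1, g1, b1) # ls in
     if take (length LL) ll = map (whisker a b) LL
     then Some (map (whisker a b) R @ drop (length LL) ll) else None)"

lemma match_atD:
  assumes "match_at L R ls = Some ls'"
  obtains a b where "L \<noteq> []" "ls = map (whisker a b) L @ drop (length L) ls"
    "ls' = map (whisker a b) R @ drop (length L) ls"
proof -
  obtain a0 g0 b0 L' a1 g1 b1 ls0 where "L = (a0, g0, b0) # L'" "ls = (a1, g1, b1) # ls0"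
    using assms by (cases "(L, R, ls)" rule: match_at.cases) auto
  with assms that show thesis
    by (auto simp: Let_def split: if_splits) (metis append_take_drop_id)
qed

fun rewrite_nth :: "nat \<Rightarrow> layer list \<Rightarrow> layer list \<Rightarrow> layer list \<Rightarrow> layer list option" where
  "rewrite_nth n L R [] = None"
| "rewrite_nth n L R (l # ls) =
    (case match_at L R (l # ls) of
       Some r \<Rightarrow> (if n = 0 then Some r else map_option (Cons l) (rewrite_nth (n - 1) L R ls))
     | None \<Rightarrow> map_option (Cons l) (rewrite_nth n L R ls))"

datatype dterm =
    Gen gen
  | Idw "letter list"
  | Vcomp dterm dterm  (infixr "\<star>" 55)
  | Hcomp dterm dterm  (infixr "\<odot>" 60)

fun term_dom :: "dterm \<Rightarrow> letter list" where
  "term_dom (Gen g) = gen_dom g" | "term_dom (Idw w) = w"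
| "term_dom (x \<star> y) = term_dom y" | "term_dom (x \<odot> y) = term_dom x @ term_dom y"

fun term_cod :: "dterm \<Rightarrow> letter list" where
  "term_cod (Gen g) = gen_cod g" | "term_cod (Idw w) = w"
| "term_cod (x \<star> y) = term_cod x" | "term_cod (x \<odot> y) = term_cod x @ term_cod y"

fun term_wf :: "dterm \<Rightarrow> bool" where
  "term_wf (Gen g) = True" | "term_wf (Idw w) = True"
| "term_wf (x \<star> y) = (term_wf x \<and> term_wf y \<and> term_dom x = term_cod y)"
| "term_wf (x \<odot> y) = (term_wf x \<and> term_wf y)"

fun flatten :: "dterm \<Rightarrow> layer list" where
  "flatten (Gen g) = [([], g, [])]" | "flatten (Idw w) = []"
| "flatten (x \<star> y) = flatten x @ flatten y"
| "flatten (x \<odot> y) = map (whisker [] (term_cod y)) (flatten x) @ map (whisker (term_dom x) []) (flatten y)"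

fun term_gens :: "dterm \<Rightarrow> gen set" where
  "term_gens (Gen g) = {g}" | "term_gens (Idw w) = {}"
| "term_gens (x \<star> y) = term_gens x \<union> term_gens y" | "term_gens (x \<odot> y) = term_gens x \<union> term_gens y"

type_synonym equation = "dterm \<times> dterm"

definition eqn_wf :: "equation \<Rightarrow> bool" where
  "eqn_wf e \<longleftrightarrow> term_wf (fst e) \<and> term_wf (snd e) \<and>
     term_dom (fst e) = term_dom (snd e) \<and> term_cod (fst e) = term_cod (snd e)"

text \<open>
  A step \<open>(e, backwards, n, m)\<close> puts the diagram and the side of \<open>e\<close> to be matched (the
  right-hand side if \<open>backwards\<close>) into \<open>m\<close>-normal form and replaces the \<open>n\<close>-th occurrence
  of the latter by the other side of \<open>e\<close>.
\<close>

type_synonym rewrite_step = "equation \<times> bool \<times> nat \<times> nf_mode"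

fun run_script :: "rewrite_step list \<Rightarrow> layer list \<Rightarrow> layer list option" where
  "run_script [] ls = Some (normalize_diag Left_first ls)"
| "run_script (((x, y), backwards, n, m) # steps) ls =
    (case rewrite_nth n (normalize_diag m (flatten (if backwards then y else x)))
            (flatten (if backwards then x else y)) (normalize_diag m ls) of
       None \<Rightarrow> None
     | Some ls' \<Rightarrow> run_script steps ls')"

abbreviation fwd :: "equation \<Rightarrow> rewrite_step" where "fwd e \<equiv> (e, False, 0, Left_first)"
abbreviation bwd :: "equation \<Rightarrow> rewrite_step" where "bwd e \<equiv> (e, True, 0, Left_first)"
abbreviation fwd_rf :: "equation \<Rightarrow> rewrite_step" where "fwd_rf e \<equiv> (e, False, 0, Right_first)"
abbreviation bwd_rf :: "equation \<Rightarrow> rewrite_step" where "bwd_rf e \<equiv> (e, True, 0, Right_first)"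

definition joinable :: "rewrite_step list \<Rightarrow> dterm \<Rightarrow> rewrite_step list \<Rightarrow> dterm \<Rightarrow> bool" where
  "joinable xs x ys y \<longleftrightarrow>
     run_script xs (flatten x) \<noteq> None \<and> run_script xs (flatten x) = run_script ys (flatten y)"

section \<open>Soundness of diagram rewriting\<close>

locale diagram_semantics = endo_two_category C k for C :: "('o, 'a, 'c) twocat" and k +
  fixes s t :: 'a
  assumes s_End: "s \<in> End" and t_End: "t \<in> End"
begin

fun letter_cell :: "letter \<Rightarrow> 'a" where
  "letter_cell S = s" | "letter_cell T = t"

fun word :: "letter list \<Rightarrow> 'a" where
  "word [] = I1 C k"
| "word (x # xs) = Cp C (letter_cell x) (word xs)"

lemma word_End [simp]: "word w \<in> End"
proof (induction w)
  case (Cons x w)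
  then show ?case by (cases x) (simp_all add: comp_in_End s_End t_End)
qed (simp add: id_in_End)

lemma word_append: "word (a @ b) = Cp C (word a) (word b)"
proof (induction a)
  case (Cons x a)
  have "letter_cell x \<in> End" by (cases x) (simp_all add: s_End t_End)
  with Cons show ?case by (simp add: comp_assoc)
qed (simp add: comp_id_left)

lemma id_word_cell [simp]: "I2 C (word w) \<in> Cl C (word w) (word w)"
  by (simp add: id2_cell)

definition typed :: "(gen \<Rightarrow> 'c) \<Rightarrow> bool" where
  "typed f \<longleftrightarrow> (\<forall>g. f g \<in> Cl C (word (gen_dom g)) (word (gen_cod g)))"

definition eval_layer :: "(gen \<Rightarrow> 'c) \<Rightarrow> layer \<Rightarrow> 'c" where
  "eval_layer f l = (case l of (a, g, b) \<Rightarrow> H2 C (I2 C (word a)) (H2 C (f g) (I2 C (word b))))"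

fun eval_diag :: "(gen \<Rightarrow> 'c) \<Rightarrow> letter list \<Rightarrow> layer list \<Rightarrow> 'c" where
  "eval_diag f w [] = I2 C (word w)"
| "eval_diag f w (l # ls) = V2 C (eval_layer f l) (eval_diag f w ls)"

fun eval_term :: "(gen \<Rightarrow> 'c) \<Rightarrow> dterm \<Rightarrow> 'c" where
  "eval_term f (Gen g) = f g" | "eval_term f (Idw w) = I2 C (word w)"
| "eval_term f (x \<star> y) = V2 C (eval_term f x) (eval_term f y)"
| "eval_term f (x \<odot> y) = H2 C (eval_term f x) (eval_term f y)"

definition diag_equiv :: "(gen \<Rightarrow> 'c) \<Rightarrow> letter list \<Rightarrow> layer list \<Rightarrow> layer list \<Rightarrow> bool" where
  "diag_equiv f w ls ls' \<longleftrightarrow> diag_wf w ls \<and> diag_wf w ls' \<and>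
     diag_cod w ls = diag_cod w ls' \<and> eval_diag f w ls = eval_diag f w ls'"

definition holds :: "(gen \<Rightarrow> 'c) \<Rightarrow> equation \<Rightarrow> bool" where
  "holds f e \<longleftrightarrow> eqn_wf e \<and> eval_term f (fst e) = eval_term f (snd e)"

lemma diag_equiv_refl: "diag_wf w ls \<Longrightarrow> diag_equiv f w ls ls"
  by (simp add: diag_equiv_def)

lemma diag_equiv_sym: "diag_equiv f w ls ls' \<Longrightarrow> diag_equiv f w ls' ls"
  by (auto simp: diag_equiv_def)

lemma diag_equiv_trans: "diag_equiv f w ls ls' \<Longrightarrow> diag_equiv f w ls' ls'' \<Longrightarrow> diag_equiv f w ls ls''"
  by (auto simp: diag_equiv_def)

lemma diag_equiv_Cons:
  "diag_equiv f w ls ls' \<Longrightarrow> layer_dom l = diag_cod w ls \<Longrightarrow> diag_equiv f w (l # ls) (l # ls')"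
  by (auto simp: diag_equiv_def)

lemma eval_term_cell:
  "term_wf x \<Longrightarrow> \<forall>g \<in> term_gens x. f g \<in> Cl C (word (gen_dom g)) (word (gen_cod g)) \<Longrightarrow>
    eval_term f x \<in> Cl C (word (term_dom x)) (word (term_cod x))"
proof (induction x)
  case (Vcomp x y)
  then show ?case by (auto intro: vcomp_cell)
next
  case (Hcomp x y)
  then have "H2 C (eval_term f x) (eval_term f y)
      \<in> Cl C (Cp C (word (term_dom x)) (word (term_dom y))) (Cp C (word (term_cod x)) (word (term_cod y)))"
    by (intro hcomp_cell) auto
  then show ?case by (simp add: word_append)
qed auto

context
  fixes f :: "gen \<Rightarrow> 'c"
  assumes f: "typed f"
begin

lemma gen_cell: "f g \<in> Cl C (word (gen_dom g)) (word (gen_cod g))"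
  using f typed_def by blast

lemma eval_layer_cell: "eval_layer f l \<in> Cl C (word (layer_dom l)) (word (layer_cod l))"
proof (cases l)
  case (fields a g b)
  have "H2 C (f g) (I2 C (word b)) \<in> Cl C (Cp C (word (gen_dom g)) (word b)) (Cp C (word (gen_cod g)) (word b))"
    using hcomp_cell[OF gen_cell id_word_cell] by simp
  from hcomp_cell[OF id_word_cell this] fields show ?thesis
    by (simp add: eval_layer_def word_append comp_in_End)
qed

lemma eval_diag_cell: "diag_wf w ls \<Longrightarrow> eval_diag f w ls \<in> Cl C (word w) (word (diag_cod w ls))"
proof (induction ls)
  case (Cons l ls)
  then show ?case using eval_layer_cell[of l] by (auto intro: vcomp_cell)
qed simp

lemma eval_diag_append:
  "diag_wf w (xs @ ys) \<Longrightarrow> eval_diag f w (xs @ ys) = V2 C (eval_diag f (diag_cod w ys) xs) (eval_diag f w ys)"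
proof (induction xs)
  case Nil
  then show ?case using eval_diag_cell[of w ys] by (simp add: vcomp_id_left)
next
  case (Cons x xs)
  then have wf: "diag_wf w ys" "diag_wf (diag_cod w ys) xs" "layer_dom x = diag_cod (diag_cod w ys) xs"
    by (auto simp: diag_wf_append diag_cod_append)
  have "eval_diag f w ((x # xs) @ ys) = V2 C (eval_layer f x) (V2 C (eval_diag f (diag_cod w ys) xs) (eval_diag f w ys))"
    using Cons wf by (simp add: diag_wf_append diag_cod_append)
  also have "\<dots> = V2 C (V2 C (eval_layer f x) (eval_diag f (diag_cod w ys) xs)) (eval_diag f w ys)"
    using eval_diag_cell[OF wf(2)] wf(3)
    by (simp add: vcomp_assoc[OF eval_layer_cell _ eval_diag_cell[OF wf(1)]])
  finally show ?case by simp
qed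

lemma eval_layer_shift: "eval_layer f (a @ a', g, b) = H2 C (I2 C (word a)) (eval_layer f (a', g, b))"
proof -
  have "H2 C (I2 C (word a)) (H2 C (I2 C (word a')) (H2 C (f g) (I2 C (word b))))
      = H2 C (H2 C (I2 C (word a)) (I2 C (word a'))) (H2 C (f g) (I2 C (word b)))"
    using hcomp_assoc[OF id_word_cell id_word_cell hcomp_cell[OF gen_cell id_word_cell]]
    by (simp add: comp_in_End)
  then show ?thesis by (simp add: eval_layer_def hcomp_id2 word_append)
qed

lemma eval_layer_whisker:
  "H2 C (I2 C (word a)) (H2 C (eval_layer f l) (I2 C (word b))) = eval_layer f (whisker a b l)"
proof (cases l)
  case (fields a' g b')
  let ?g = "H2 C (f g) (I2 C (word b'))"
  have g: "?g \<in> Cl C (Cp C (word (gen_dom g)) (word b')) (Cp C (word (gen_cod g)) (word b'))"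
    using hcomp_cell[OF gen_cell id_word_cell] by simp
  have "H2 C (eval_layer f (a', g, b')) (I2 C (word b))
      = H2 C (I2 C (word a')) (H2 C ?g (I2 C (word b)))"
    using hcomp_assoc[OF id_word_cell g id_word_cell] by (simp add: eval_layer_def comp_in_End)
  also have "H2 C ?g (I2 C (word b)) = H2 C (f g) (I2 C (word (b' @ b)))"
    using hcomp_assoc[OF gen_cell id_word_cell id_word_cell] by (simp add: hcomp_id2 word_append)
  finally have "H2 C (eval_layer f (a', g, b')) (I2 C (word b)) = eval_layer f (a', g, b' @ b)"
    by (simp add: eval_layer_def)
  then show ?thesis using fields eval_layer_shift by simp
qed

lemma eval_diag_whisker:
  "diag_wf w ls \<Longrightarrow>
    H2 C (I2 C (word a)) (H2 C (eval_diag f w ls) (I2 C (word b))) = eval_diag f (a @ w @ b) (map (whisker a b) ls)"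
proof (induction ls)
  case Nil
  then show ?case by (simp add: hcomp_id2 word_append comp_in_End)
next
  case (Cons l ls)
  have wf: "diag_wf w ls" "layer_dom l = diag_cod w ls" using Cons.prems by auto
  have L: "eval_layer f l \<in> Cl C (word (layer_dom l)) (word (layer_cod l))" by (rule eval_layer_cell)
  have D: "eval_diag f w ls \<in> Cl C (word w) (word (layer_dom l))" using eval_diag_cell wf by simp
  have "H2 C (eval_diag f w (l # ls)) (I2 C (word b))
      = V2 C (H2 C (eval_layer f l) (I2 C (word b))) (H2 C (eval_diag f w ls) (I2 C (word b)))"
    using whisker_right_vcomp[OF L D] by simp
  moreover have "H2 C (I2 C (word a)) \<dots>
      = V2 C (H2 C (I2 C (word a)) (H2 C (eval_layer f l) (I2 C (word b))))
             (H2 C (I2 C (word a)) (H2 C (eval_diag f w ls) (I2 C (word b))))"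
    using whisker_left_vcomp[OF hcomp_cell[OF L id_word_cell] hcomp_cell[OF D id_word_cell]]
    by (simp add: comp_in_End)
  ultimately show ?case using Cons wf eval_layer_whisker by simp
qed

lemma eval_layers_commute:
  "V2 C (eval_layer f (a, g1, c @ gen_cod g2 @ b)) (eval_layer f (a @ gen_dom g1 @ c, g2, b))
    = V2 C (eval_layer f (a @ gen_cod g1 @ c, g2, b)) (eval_layer f (a, g1, c @ gen_dom g2 @ b))"
proof -
  let ?x = "f g1" and ?y = "eval_layer f (c, g2, b)"
  let ?lower = "word (c @ gen_dom g2 @ b)" and ?upper = "word (c @ gen_cod g2 @ b)"
  have x: "?x \<in> Cl C (word (gen_dom g1)) (word (gen_cod g1))" by (rule gen_cell)
  have y: "?y \<in> Cl C ?lower ?upper" using eval_layer_cell[of "(c, g2, b)"] by simp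
  have shift: "eval_layer f (a @ w @ c, g2, b) = H2 C (I2 C (word a)) (H2 C (I2 C (word w)) ?y)" for w
    by (simp only: eval_layer_shift)
  have "V2 C (eval_layer f (a, g1, c @ gen_cod g2 @ b)) (eval_layer f (a @ gen_dom g1 @ c, g2, b))
      = H2 C (I2 C (word a)) (V2 C (H2 C ?x (I2 C ?upper)) (H2 C (I2 C (word (gen_dom g1))) ?y))"
    using whisker_left_vcomp[OF hcomp_cell[OF x id_word_cell] hcomp_cell[OF id_word_cell y]]
    by (simp add: shift eval_layer_def[of f "(a, g1, c @ gen_cod g2 @ b)"] comp_in_End)
  also have "\<dots> = H2 C (I2 C (word a)) (H2 C ?x ?y)"
    using hcomp_right_first[OF x y] by simp
  also have "\<dots> = H2 C (I2 C (word a)) (V2 C (H2 C (I2 C (word (gen_cod g1))) ?y) (H2 C ?x (I2 C ?lower)))"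
    using hcomp_left_first[OF x y] by simp
  also have "\<dots> = V2 C (eval_layer f (a @ gen_cod g1 @ c, g2, b)) (eval_layer f (a, g1, c @ gen_dom g2 @ b))"
    using whisker_left_vcomp[OF hcomp_cell[OF id_word_cell y] hcomp_cell[OF x id_word_cell]]
    by (simp add: shift eval_layer_def[of f "(a, g1, c @ gen_dom g2 @ b)"] comp_in_End)
  finally show ?thesis .
qed

lemma interchange_sound:
  assumes "interchange m l1 l2 = Some (u, d)" "layer_dom l1 = layer_cod l2"
  shows "layer_dom d = layer_dom l2 \<and> layer_cod u = layer_cod l1 \<and> layer_dom u = layer_cod d \<and>
    V2 C (eval_layer f u) (eval_layer f d) = V2 C (eval_layer f l1) (eval_layer f l2)"
  using assms by (cases rule: interchange_shape) (simp_all add: eval_layers_commute)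

lemma diag_equiv_interchange:
  assumes "diag_wf w (l1 # l2 # r)" "interchange m l1 l2 = Some (u, d)"
  shows "diag_equiv f w (l1 # l2 # r) (u # d # r)"
proof -
  have wf: "layer_dom l1 = layer_cod l2" "layer_dom l2 = diag_cod w r" "diag_wf w r" using assms(1) by auto
  note sw = interchange_sound[OF assms(2) wf(1)]
  have R: "eval_diag f w r \<in> Cl C (word w) (word (layer_dom l2))" using eval_diag_cell[OF wf(3)] wf by simp
  have l2: "eval_layer f l2 \<in> Cl C (word (layer_dom l2)) (word (layer_dom l1))"
    and d: "eval_layer f d \<in> Cl C (word (layer_dom l2)) (word (layer_dom u))"
    using eval_layer_cell[of l2] eval_layer_cell[of d] wf sw by simp_all
  have "eval_diag f w (l1 # l2 # r) = V2 C (V2 C (eval_layer f l1) (eval_layer f l2)) (eval_diag f w r)"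
    using vcomp_assoc[OF eval_layer_cell[of l1] l2 R] by simp
  also have "\<dots> = eval_diag f w (u # d # r)"
    using vcomp_assoc[OF eval_layer_cell[of u] d R] sw by simp
  finally show ?thesis using assms(1) sw wf by (simp add: diag_equiv_def)
qed

lemma interchange_pass_sound: "diag_wf w ls \<Longrightarrow> diag_equiv f w ls (interchange_pass m ls)"
proof (induction m ls rule: interchange_pass.induct)
  case (1 m l1 l2 r)
  show ?case
  proof (cases "interchange m l1 l2")
    case None
    have "diag_equiv f w (l2 # r) (interchange_pass m (l2 # r))"
      using "1.IH"(1)[OF None] "1.prems" by simp
    then show ?thesis using None "1.prems" by (simp add: diag_equiv_Cons)
  next
    case (Some ud)
    obtain u d where ud: "ud = (u, d)" by (cases ud)
    note swap = diag_equiv_interchange[OF "1.prems" Some[unfolded ud]]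
    then have wf: "diag_wf w (u # d # r)" by (simp add: diag_equiv_def)
    then have "diag_equiv f w (d # r) (interchange_pass m (d # r))"
      using "1.IH"(2)[OF Some ud[symmetric]] by simp
    then have "diag_equiv f w (u # d # r) (u # interchange_pass m (d # r))"
      using wf by (simp add: diag_equiv_Cons)
    then show ?thesis using Some ud diag_equiv_trans[OF swap] by simp
  qed
qed (simp_all add: diag_equiv_refl)

lemma normalize_iter_sound: "diag_wf w ls \<Longrightarrow> diag_equiv f w ls (normalize_iter m n ls)"
proof (induction n arbitrary: ls)
  case (Suc n)
  have pass: "diag_equiv f w ls (interchange_pass m ls)"
    by (rule interchange_pass_sound[OF Suc.prems])
  then have "diag_equiv f w (interchange_pass m ls) (normalize_iter m n (interchange_pass m ls))"
    using Suc.IH by (simp add: diag_equiv_def)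
  then show ?case
    using diag_equiv_trans[OF pass] diag_equiv_refl[OF Suc.prems] by (simp add: Let_def)
qed (simp add: diag_equiv_refl)

lemma normalize_diag_sound: "diag_wf w ls \<Longrightarrow> diag_equiv f w ls (normalize_diag m ls)"
  unfolding normalize_diag_def by (rule normalize_iter_sound)

lemma diag_equiv_rewrite_front:
  assumes eq: "diag_equiv f w L R" and ne: "L \<noteq> []"
    and wf: "diag_wf w0 (map (whisker a b) L @ Q)"
  shows "diag_equiv f w0 (map (whisker a b) L @ Q) (map (whisker a b) R @ Q)"
proof -
  from eq have wL: "diag_wf w L" and wR: "diag_wf w R"
    and cod: "diag_cod w L = diag_cod w R" and val: "eval_diag f w L = eval_diag f w R"
    by (simp_all add: diag_equiv_def)
  from wf have wQ: "diag_wf w0 Q" and wLQ: "diag_wf (diag_cod w0 Q) (map (whisker a b) L)"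
    by (simp_all add: diag_wf_append)
  have "layer_dom (last (map (whisker a b) L)) = diag_cod w0 Q" using diag_wf_last[OF wLQ] ne by simp
  then have Q: "diag_cod w0 Q = a @ w @ b"
    using diag_wf_last[OF wL ne] ne by (cases "last L") (auto simp: last_map)
  note WL = diag_wf_whisker[OF wL, of a b] and WR = diag_wf_whisker[OF wR, of a b]
  have wRQ: "diag_wf w0 (map (whisker a b) R @ Q)" using WR wQ Q by (simp add: diag_wf_append)
  have "eval_diag f w0 (map (whisker a b) L @ Q) = eval_diag f w0 (map (whisker a b) R @ Q)"
    using eval_diag_append[OF wf] eval_diag_append[OF wRQ] Q
      eval_diag_whisker[OF wL, of a b] eval_diag_whisker[OF wR, of a b] val
    by simp
  then show ?thesis using wf wRQ WL WR Q cod by (simp add: diag_equiv_def diag_cod_append)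
qed

lemma rewrite_nth_sound:
  assumes eq: "diag_equiv f w L R"
  shows "diag_wf w0 ls \<Longrightarrow> rewrite_nth n L R ls = Some ls' \<Longrightarrow> diag_equiv f w0 ls ls'"
proof (induction ls arbitrary: n ls')
  case (Cons l ls)
  have keep_head: "diag_equiv f w0 (l # ls) (l # ls0)" if "rewrite_nth n' L R ls = Some ls0" for n' ls0
    using Cons.IH[OF _ that] Cons.prems(1) by (simp add: diag_equiv_Cons)
  show ?case
  proof (cases "match_at L R (l # ls)")
    case None
    then show ?thesis using Cons.prems(2) keep_head by (auto split: option.splits)
  next
    case (Some r)
    show ?thesis
    proof (cases "n = 0")
      case True
      then have r: "ls' = r" using Cons.prems(2) Some by simp
      obtain a b where "L \<noteq> []" and split: "l # ls = map (whisker a b) L @ drop (length L) (l # ls)"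
        and "r = map (whisker a b) R @ drop (length L) (l # ls)"
        using match_atD[OF Some] by blast
      then show ?thesis
        using diag_equiv_rewrite_front[OF eq \<open>L \<noteq> []\<close>, where a = a and b = b] Cons.prems(1) r
        by (metis split)
    next
      case False
      then show ?thesis using Cons.prems(2) Some keep_head by (auto split: option.splits)
    qed
  qed
qed simp

lemma flatten_sound:
  "term_wf x \<Longrightarrow> diag_wf (term_dom x) (flatten x) \<and> diag_cod (term_dom x) (flatten x) = term_cod x \<and>
     eval_term f x = eval_diag f (term_dom x) (flatten x)"
proof (induction x)
  case (Gen g)
  have "f g \<in> Cl C (word (gen_dom g)) (word (gen_cod g))" by (rule gen_cell)
  then show ?case
    by (simp add: eval_layer_def vcomp_id_right hcomp_id_left[OF _ word_End] hcomp_id_right[OF _ word_End])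
next
  case (Vcomp x y)
  then have wf: "term_wf x" "term_wf y" "term_dom x = term_cod y" by auto
  note X = Vcomp.IH(1)[OF wf(1)] and Y = Vcomp.IH(2)[OF wf(2)]
  have "diag_wf (term_dom y) (flatten x @ flatten y)" using X Y wf by (simp add: diag_wf_append)
  then show ?case using X Y wf eval_diag_append by (simp add: diag_cod_append)
next
  case (Hcomp x y)
  then have wf: "term_wf x" "term_wf y" by auto
  note X = Hcomp.IH(1)[OF wf(1)] and Y = Hcomp.IH(2)[OF wf(2)]
  let ?X = "map (whisker [] (term_cod y)) (flatten x)" and ?Y = "map (whisker (term_dom x) []) (flatten y)"
  have WX: "diag_wf (term_dom x @ term_cod y) ?X" "diag_cod (term_dom x @ term_cod y) ?X = term_cod x @ term_cod y"
    using diag_wf_whisker[of "term_dom x" "flatten x" "[]" "term_cod y"] X by auto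
  have WY: "diag_wf (term_dom x @ term_dom y) ?Y" "diag_cod (term_dom x @ term_dom y) ?Y = term_dom x @ term_cod y"
    using diag_wf_whisker[of "term_dom y" "flatten y" "term_dom x" "[]"] Y by auto
  have wf_flat: "diag_wf (term_dom x @ term_dom y) (?X @ ?Y)" using WX WY by (simp add: diag_wf_append)
  have cx: "eval_term f x \<in> Cl C (word (term_dom x)) (word (term_cod x))"
    using X eval_diag_cell[of "term_dom x" "flatten x"] by simp
  have cy: "eval_term f y \<in> Cl C (word (term_dom y)) (word (term_cod y))"
    using Y eval_diag_cell[of "term_dom y" "flatten y"] by simp
  have "eval_term f (x \<odot> y)
      = V2 C (H2 C (eval_term f x) (I2 C (word (term_cod y)))) (H2 C (I2 C (word (term_dom x))) (eval_term f y))"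
    using hcomp_right_first[OF cx cy] by simp
  also have "H2 C (eval_term f x) (I2 C (word (term_cod y))) = eval_diag f (term_dom x @ term_cod y) ?X"
    using eval_diag_whisker[of "term_dom x" "flatten x" "[]" "term_cod y"] X
      hcomp_id_left[OF hcomp_cell[OF cx id_word_cell]]
    by (simp add: comp_in_End)
  also have "H2 C (I2 C (word (term_dom x))) (eval_term f y) = eval_diag f (term_dom x @ term_dom y) ?Y"
    using eval_diag_whisker[of "term_dom y" "flatten y" "term_dom x" "[]"] Y hcomp_id_right[OF cy]
    by simp
  finally show ?case using wf_flat WX WY eval_diag_append[OF wf_flat] by (simp add: diag_cod_append)
qed simp

lemma holds_diag_equiv: "holds f (x, y) \<Longrightarrow> diag_equiv f (term_dom x) (flatten x) (flatten y)"
  using flatten_sound[of x] flatten_sound[of y] by (simp add: holds_def eqn_wf_def diag_equiv_def)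

lemma run_script_sound:
  "\<forall>st \<in> set steps. holds f (fst st) \<Longrightarrow> diag_wf w ls \<Longrightarrow> run_script steps ls = Some ls' \<Longrightarrow>
    diag_equiv f w ls ls'"
proof (induction steps arbitrary: ls)
  case Nil
  then show ?case using normalize_diag_sound[OF Nil.prems(2), of Left_first] by simp
next
  case (Cons st steps)
  obtain x y backwards n m where st: "st = ((x, y), backwards, n, m)" by (cases st) auto
  let ?L = "flatten (if backwards then y else x)" and ?R = "flatten (if backwards then x else y)"
  have "holds f (x, y)" using Cons.prems(1) st by simp
  then have "diag_equiv f (term_dom x) ?L ?R"
    using holds_diag_equiv[of x y] diag_equiv_sym[of f "term_dom x" "flatten x" "flatten y"]
    by (simp add: holds_def eqn_wf_def)
  then have eq: "diag_equiv f (term_dom x) (normalize_diag m ?L) ?R"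
    by (meson diag_equiv_def diag_equiv_sym diag_equiv_trans normalize_diag_sound)
  obtain ls1 where rw: "rewrite_nth n (normalize_diag m ?L) ?R (normalize_diag m ls) = Some ls1"
    and rest: "run_script steps ls1 = Some ls'"
    using Cons.prems(3) st by (auto split: option.splits)
  have "diag_equiv f w ls ls1"
    using diag_equiv_trans[OF normalize_diag_sound[OF Cons.prems(2)] rewrite_nth_sound[OF eq _ rw]]
      normalize_diag_sound[OF Cons.prems(2), of m]
    by (simp add: diag_equiv_def)
  moreover have "diag_equiv f w ls1 ls'"
    using Cons.IH[OF _ _ rest] Cons.prems(1) calculation by (simp add: diag_equiv_def)
  ultimately show ?case by (rule diag_equiv_trans)
qed

lemma holds_by_script:
  assumes check: "eqn_wf e \<and> joinable xs (fst e) ys (snd e)"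
    and steps: "\<forall>st \<in> set (xs @ ys). holds f (fst st)"
  shows "holds f e"
proof -
  obtain x y where e: "e = (x, y)" by fastforce
  from check have wf: "eqn_wf e" and join: "joinable xs (fst e) ys (snd e)" by simp_all
  obtain X where X: "run_script xs (flatten x) = Some X" "run_script ys (flatten y) = Some X"
    using join e unfolding joinable_def by fastforce
  have fx: "diag_wf (term_dom x) (flatten x)" and fy: "diag_wf (term_dom x) (flatten y)"
    using flatten_sound[of x] flatten_sound[of y] wf e by (simp_all add: eqn_wf_def)
  have "diag_equiv f (term_dom x) (flatten x) (flatten y)"
    using diag_equiv_trans[OF run_script_sound[OF _ fx X(1)] diag_equiv_sym[OF run_script_sound[OF _ fy X(2)]]]
      steps by simp
  then show ?thesis
    using flatten_sound[of x] flatten_sound[of y] wf e by (simp add: holds_def eqn_wf_def diag_equiv_def)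
qed

end

lemma holds_sym: "holds f (x, y) \<Longrightarrow> holds f (y, x)"
  by (auto simp: holds_def eqn_wf_def)

lemma holds_trans: "holds f (x, y) \<Longrightarrow> holds f (y, z) \<Longrightarrow> holds f (x, z)"
  by (auto simp: holds_def eqn_wf_def)

lemma holds_iff: "holds f (fst e, fst e') \<Longrightarrow> holds f (snd e, snd e') \<Longrightarrow> holds f e \<longleftrightarrow> holds f e'"
  by (auto simp: holds_def eqn_wf_def)

end

section \<open>The equations of the correspondence\<close>

text \<open>
  In the notation of the paper: \<open>psi_ext = s\<mu> * \<psi>t\<close>, \<open>nu_ext = s\<mu> * \<nu>t\<close>,
  \<open>vartheta_ext = s\<mu> * \<vartheta>t\<close>, \<open>em_id_psi = \<psi> * \<eta>s\<close> (the identity 2-cell on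
  \<open>(s, \<psi>)\<close>) and \<open>Theta_psi_nu = s\<mu> * s\<mu>t * \<nu>tt * s\<psi>t\<close>.
\<close>

abbreviation psi_ext :: dterm where
  "psi_ext \<equiv> Idw [S] \<odot> Gen Mu \<star> Gen Psi \<odot> Idw [T]"

abbreviation nu_ext :: dterm where
  "nu_ext \<equiv> Idw [S] \<odot> Gen Mu \<star> Gen Nu \<odot> Idw [T]"

abbreviation vartheta_ext :: dterm where
  "vartheta_ext \<equiv> Idw [S] \<odot> Gen Mu \<star> Gen Vartheta \<odot> Idw [T]"

abbreviation em_id_psi :: dterm where
  "em_id_psi \<equiv> Gen Psi \<star> Gen Eta \<odot> Idw [S]"

abbreviation Theta_psi_nu :: dterm where
  "Theta_psi_nu \<equiv>
    Idw [S] \<odot> Gen Mu \<star> (Idw [S] \<odot> Gen Mu) \<odot> Idw [T] \<star> Gen Nu \<odot> Idw [T, T] \<star>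
    (Idw [S] \<odot> Gen Psi) \<odot> Idw [T]"

definition eq_mu_assoc :: equation where
  "eq_mu_assoc = (Gen Mu \<star> Gen Mu \<odot> Idw [T],
    Gen Mu \<star> Idw [T] \<odot> Gen Mu)"

definition eq_mu_unit_left :: equation where
  "eq_mu_unit_left = (Gen Mu \<star> Gen Eta \<odot> Idw [T],
    Idw [T])"

definition eq_mu_unit_right :: equation where
  "eq_mu_unit_right = (Gen Mu \<star> Idw [T] \<odot> Gen Eta,
    Idw [T])"

definition eq_psi_mu :: equation where
  "eq_psi_mu = (Idw [S] \<odot> Gen Mu \<star> Gen Psi \<odot> Idw [T] \<star> Idw [T] \<odot> Gen Psi,
    Gen Psi \<star> Gen Mu \<odot> Idw [S])"

definition eq_nu_compat :: equation where
  "eq_nu_compat = (Idw [S] \<odot> Gen Mu \<star> Gen Nu \<odot> Idw [T] \<star> Idw [S] \<odot> Gen Psi \<star> Gen Psi \<odot> Idw [S],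
    Idw [S] \<odot> Gen Mu \<star> Gen Psi \<odot> Idw [T] \<star> Idw [T] \<odot> Gen Nu)"

definition eq_nu_normal :: equation where
  "eq_nu_normal = (Idw [S] \<odot> Gen Mu \<star> Gen Psi \<odot> Idw [T] \<star> Gen Eta \<odot> Idw [S, T] \<star> Gen Nu,
    Gen Nu)"

definition eq_vartheta_compat :: equation where
  "eq_vartheta_compat = (Idw [S] \<odot> Gen Mu \<star> Gen Psi \<odot> Idw [T] \<star> Idw [T] \<odot> Gen Vartheta,
    Idw [S] \<odot> Gen Mu \<star> Gen Vartheta \<odot> Idw [T] \<star> Idw [T])"

definition eq_vartheta_normal :: equation where
  "eq_vartheta_normal = (Idw [S] \<odot> Gen Mu \<star> Gen Psi \<odot> Idw [T] \<star> Gen Eta \<odot> Idw [S, T] \<star> Gen Vartheta,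
    Gen Vartheta)"

definition eq_em_assoc :: equation where
  "eq_em_assoc =
    (Idw [S] \<odot> Gen Mu \<star> Gen Nu \<odot> Idw [T] \<star> Idw [S, S] \<odot> Gen Mu \<star>
     (Idw [S] \<odot> em_id_psi) \<odot> Idw [T] \<star> Idw [S] \<odot> Gen Psi \<star>
     Gen Nu \<odot> Idw [S],
     Idw [S] \<odot> Gen Mu \<star> Gen Nu \<odot> Idw [T] \<star> Idw [S, S] \<odot> Gen Mu \<star>
     (Idw [S] \<odot> Gen Nu) \<odot> Idw [T] \<star> Idw [S] \<odot> (Idw [S] \<odot> Gen Psi \<star> Gen Psi \<odot> Idw [S]) \<star>
     em_id_psi \<odot> Idw [S, S])"

definition eq_em_unit_left :: equation where
  "eq_em_unit_left =
    (Idw [S] \<odot> Gen Mu \<star> Gen Nu \<odot> Idw [T] \<star> Idw [S, S] \<odot> Gen Mu \<star>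
     (Idw [S] \<odot> em_id_psi) \<odot> Idw [T] \<star> Idw [S] \<odot> Gen Psi \<star>
     Gen Vartheta \<odot> Idw [S],
     em_id_psi)"

definition eq_em_unit_right :: equation where
  "eq_em_unit_right =
    (Idw [S] \<odot> Gen Mu \<star> Gen Nu \<odot> Idw [T] \<star> Idw [S, S] \<odot> Gen Mu \<star>
     (Idw [S] \<odot> Gen Vartheta) \<odot> Idw [T] \<star> Idw [S] \<odot> Idw [T] \<star>
     em_id_psi \<odot> Idw [],
     em_id_psi)"

definition eq_premonad_assoc :: equation where
  "eq_premonad_assoc = (Gen Theta \<star> Gen Theta \<odot> Idw [S, T],
    Gen Theta \<star> Idw [S, T] \<odot> Gen Theta)"

definition eq_premonad_unit_comm :: equation where
  "eq_premonad_unit_comm = (Gen Theta \<star> Gen Vartheta \<odot> Idw [S, T],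
    Gen Theta \<star> Idw [S, T] \<odot> Gen Vartheta)"

definition eq_premonad_unit_unit :: equation where
  "eq_premonad_unit_unit = (Gen Theta \<star> Gen Vartheta \<odot> Gen Vartheta,
    Gen Vartheta)"

definition eq_premonad_unit_absorb :: equation where
  "eq_premonad_unit_absorb = (Gen Theta \<star> Gen Theta \<odot> Idw [S, T] \<star> Gen Vartheta \<odot> Idw [S, T, S, T],
    Gen Theta)"

definition eq_premonad_mu :: equation where
  "eq_premonad_mu = (Gen Theta \<star> Idw [S, T, S] \<odot> Gen Mu,
    Idw [S] \<odot> Gen Mu \<star> Gen Theta \<odot> Idw [T])"

definition eq_Theta_from_psi_nu :: equation where
  "eq_Theta_from_psi_nu = (Gen Theta,
    Theta_psi_nu)"

definition eq_psi_from_Theta :: equation where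
  "eq_psi_from_Theta = (Gen Psi,
    Gen Theta \<star> vartheta_ext \<odot> Idw [S] \<odot> Gen Eta)"

definition eq_nu_from_Theta :: equation where
  "eq_nu_from_Theta = (Gen Nu,
    Gen Theta \<star> (Idw [S] \<odot> Gen Eta) \<odot> Idw [S] \<odot> Gen Eta)"

definition eq_psi_normal :: equation where
  "eq_psi_normal = (psi_ext \<star> Gen Eta \<odot> Idw [S, T] \<star> Gen Psi,
    Gen Psi)"

definition eq_Theta_psi :: equation where
  "eq_Theta_psi = (Theta_psi_nu \<star> Gen Psi \<odot> Idw [S, T],
    psi_ext \<star> Idw [T] \<odot> nu_ext)"

definition eq_nu_ext_normal :: equation where
  "eq_nu_ext_normal = (psi_ext \<star> Gen Eta \<odot> Idw [S, T] \<star> nu_ext,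
    nu_ext)"

definition eq_nu_ext_assoc :: equation where
  "eq_nu_ext_assoc = (nu_ext \<star> Idw [S] \<odot> Gen Psi \<star> Gen Nu \<odot> Idw [S],
    nu_ext \<star> Idw [S] \<odot> Gen Nu)"

definition eq_nu_ext_unit_left :: equation where
  "eq_nu_ext_unit_left = (nu_ext \<star> Idw [S] \<odot> Gen Psi \<star> Gen Vartheta \<odot> Idw [S],
    em_id_psi)"

definition eq_nu_ext_unit_right :: equation where
  "eq_nu_ext_unit_right = (nu_ext \<star> Idw [S] \<odot> Gen Vartheta,
    em_id_psi)"

definition eq_nu_ext_assoc_whisker :: equation where
  "eq_nu_ext_assoc_whisker = (nu_ext \<star> Idw [S] \<odot> nu_ext,
    Theta_psi_nu \<star> Gen Nu \<odot> Idw [S, T])"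

definition eq_psi_ext_mu :: equation where
  "eq_psi_ext_mu = (psi_ext \<star> Idw [T] \<odot> psi_ext,
    psi_ext \<star> Gen Mu \<odot> Idw [S, T])"

definition eq_Theta_mu :: equation where
  "eq_Theta_mu = (Theta_psi_nu \<star> Idw [S] \<odot> Gen Mu \<odot> Idw [S, T],
    Theta_psi_nu \<star> Idw [S, T] \<odot> psi_ext)"

definition eq_Theta_eta :: equation where
  "eq_Theta_eta = (Gen Theta \<star> (psi_ext \<star> Gen Eta \<odot> Idw [S, T]) \<odot> Idw [S, T],
    Gen Theta)"

definition eq_Theta_unit_Theta :: equation where
  "eq_Theta_unit_Theta = (Gen Theta \<star> Gen Vartheta \<odot> Idw [S, T] \<star> Gen Theta,
    Gen Theta)"

definition eq_Theta_vartheta_ext :: equation where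
  "eq_Theta_vartheta_ext = (Gen Theta \<star> vartheta_ext \<odot> Gen Vartheta,
    vartheta_ext)"

definition eq_Theta_eta_vartheta :: equation where
  "eq_Theta_eta_vartheta = (Gen Theta \<star> (Idw [S] \<odot> Gen Eta) \<odot> vartheta_ext,
    Gen Theta \<star> Gen Vartheta \<odot> Idw [S, T])"

locale monad_diagram = diagram_semantics +
  fixes f :: "gen \<Rightarrow> 'c"
  assumes typed_f: "typed f"
    and mu_assoc: "holds f eq_mu_assoc"
    and mu_unit_left: "holds f eq_mu_unit_left"
    and mu_unit_right: "holds f eq_mu_unit_right"

locale em_cell_diagram = monad_diagram +
  assumes psi_mu: "holds f eq_psi_mu"
    and nu_compat: "holds f eq_nu_compat"
    and nu_normal: "holds f eq_nu_normal"
    and vartheta_compat: "holds f eq_vartheta_compat"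
    and vartheta_normal: "holds f eq_vartheta_normal"
begin

lemma psi_normal: "holds f eq_psi_normal"
  by (rule holds_by_script[OF typed_f,
        where xs = "[fwd eq_psi_mu, fwd eq_mu_unit_left]"
          and ys = "[]"])
    (code_simp, simp add: psi_mu mu_unit_left)

lemma Theta_psi: "holds f eq_Theta_psi"
  by (rule holds_by_script[OF typed_f,
        where xs = "[fwd eq_nu_compat, fwd eq_mu_assoc]"
          and ys = "[]"])
    (code_simp, simp add: nu_compat mu_assoc)

lemma nu_ext_normal: "holds f eq_nu_ext_normal"
  by (rule holds_by_script[OF typed_f,
        where xs = "[bwd eq_mu_assoc, fwd eq_nu_normal]"
          and ys = "[]"])
    (code_simp, simp add: mu_assoc nu_normal)

text \<open>
  Modulo the 1-cell and 2-cell axioms, the monad laws in \<open>EM\<^sup>w(K)\<close> are equivalent to laws for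
  \<open>s\<mu> * \<nu>t\<close> in which the identity 2-cell \<open>\<psi> * \<eta>s\<close> no longer occurs.
\<close>

lemma em_assoc_iff: "holds f eq_em_assoc \<longleftrightarrow> holds f eq_nu_ext_assoc"
proof (rule holds_iff)
  show "holds f (fst eq_em_assoc, fst eq_nu_ext_assoc)"
    by (rule holds_by_script[OF typed_f,
          where xs = "[fwd_rf eq_psi_normal]"
            and ys = "[]"])
      (code_simp, simp add: psi_normal)
  show "holds f (snd eq_em_assoc, snd eq_nu_ext_assoc)"
    by (rule holds_by_script[OF typed_f,
          where xs = "[fwd_rf eq_nu_compat, bwd eq_mu_assoc, fwd_rf eq_Theta_psi,
                       fwd_rf eq_nu_ext_normal]"
            and ys = "[]"])
      (code_simp, simp add: nu_compat mu_assoc Theta_psi nu_ext_normal)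
qed

lemma em_unit_left_iff: "holds f eq_em_unit_left \<longleftrightarrow> holds f eq_nu_ext_unit_left"
proof (rule holds_iff)
  show "holds f (fst eq_em_unit_left, fst eq_nu_ext_unit_left)"
    by (rule holds_by_script[OF typed_f,
          where xs = "[fwd_rf eq_psi_normal]"
            and ys = "[]"])
      (code_simp, simp add: psi_normal)
  show "holds f (snd eq_em_unit_left, snd eq_nu_ext_unit_left)"
    by (simp add: holds_def eqn_wf_def eq_em_unit_left_def eq_nu_ext_unit_left_def)
qed

lemma em_unit_right_iff: "holds f eq_em_unit_right \<longleftrightarrow> holds f eq_nu_ext_unit_right"
proof (rule holds_iff)
  show "holds f (fst eq_em_unit_right, fst eq_nu_ext_unit_right)"
    by (rule holds_by_script[OF typed_f,
          where xs = "[bwd_rf eq_vartheta_compat, bwd eq_mu_assoc, fwd_rf eq_Theta_psi,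
                       fwd_rf eq_nu_ext_normal]"
            and ys = "[]"])
      (code_simp, simp add: vartheta_compat mu_assoc Theta_psi nu_ext_normal)
  show "holds f (snd eq_em_unit_right, snd eq_nu_ext_unit_right)"
    by (simp add: holds_def eqn_wf_def eq_em_unit_right_def eq_nu_ext_unit_right_def)
qed

end

locale em_monad_diagram = em_cell_diagram +
  assumes em_assoc: "holds f eq_em_assoc"
    and em_unit_left: "holds f eq_em_unit_left"
    and em_unit_right: "holds f eq_em_unit_right"
    and Theta_from_psi_nu: "holds f eq_Theta_from_psi_nu"
begin

lemma nu_ext_assoc: "holds f eq_nu_ext_assoc"
  using em_assoc em_assoc_iff by simp

lemma nu_ext_unit_left: "holds f eq_nu_ext_unit_left"
  using em_unit_left em_unit_left_iff by simp

lemma nu_ext_unit_right: "holds f eq_nu_ext_unit_right"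
  using em_unit_right em_unit_right_iff by simp

lemma nu_ext_assoc_whisker: "holds f eq_nu_ext_assoc_whisker"
  by (rule holds_by_script[OF typed_f,
        where xs = "[bwd eq_mu_assoc]"
          and ys = "[fwd eq_nu_ext_assoc]"])
    (code_simp, simp add: mu_assoc nu_ext_assoc)

lemma psi_ext_mu: "holds f eq_psi_ext_mu"
  by (rule holds_by_script[OF typed_f,
        where xs = "[bwd eq_mu_assoc]"
          and ys = "[bwd eq_psi_mu]"])
    (code_simp, simp add: mu_assoc psi_mu)

lemma Theta_mu: "holds f eq_Theta_mu"
  by (rule holds_by_script[OF typed_f,
        where xs = "[fwd eq_mu_assoc, bwd_rf eq_psi_ext_mu]"
          and ys = "[fwd_rf eq_mu_assoc]"])
    (code_simp, simp add: mu_assoc psi_ext_mu)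

lemma premonad_assoc: "holds f eq_premonad_assoc"
proof -
  define M where "M = Gen Theta \<star> (nu_ext \<star> Idw [S] \<odot> Gen Psi) \<odot> Idw [S, T] \<star> Idw [S, T, S] \<odot> psi_ext"
  have "holds f (fst eq_premonad_assoc, M)"
    unfolding M_def
    by (rule holds_by_script[OF typed_f,
          where xs = "[fwd eq_Theta_from_psi_nu, fwd eq_Theta_from_psi_nu]"
            and ys = "[fwd eq_Theta_from_psi_nu, bwd eq_Theta_mu]"])
      (code_simp, simp add: Theta_from_psi_nu Theta_mu)
  moreover have "holds f (snd eq_premonad_assoc, M)"
    unfolding M_def
    by (rule holds_by_script[OF typed_f,
          where xs = "[fwd eq_Theta_from_psi_nu, fwd eq_mu_assoc, fwd eq_Theta_from_psi_nu,
                       fwd eq_mu_assoc, bwd_rf eq_Theta_psi, fwd_rf eq_mu_assoc]"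
            and ys = "[fwd eq_Theta_from_psi_nu, fwd_rf eq_Theta_mu, bwd_rf eq_nu_ext_assoc_whisker]"])
      (code_simp, simp add: Theta_from_psi_nu mu_assoc Theta_psi Theta_mu nu_ext_assoc_whisker)
  ultimately show ?thesis by (metis holds_sym holds_trans prod.collapse)
qed

lemma premonad_unit_comm: "holds f eq_premonad_unit_comm"
  by (rule holds_by_script[OF typed_f,
        where xs = "[fwd eq_Theta_from_psi_nu, fwd eq_nu_ext_unit_left, bwd eq_nu_ext_unit_right]"
          and ys = "[fwd eq_Theta_from_psi_nu, fwd eq_mu_assoc, fwd_rf eq_vartheta_compat,
                     bwd eq_mu_assoc]"])
    (code_simp, simp add: Theta_from_psi_nu nu_ext_unit_left nu_ext_unit_right mu_assoc
      vartheta_compat)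

lemma premonad_unit_unit: "holds f eq_premonad_unit_unit"
  by (rule holds_by_script[OF typed_f,
        where xs = "[fwd eq_Theta_from_psi_nu, fwd_rf eq_nu_ext_unit_left, fwd eq_vartheta_normal]"
          and ys = "[]"])
    (code_simp, simp add: Theta_from_psi_nu nu_ext_unit_left vartheta_normal)

lemma premonad_unit_absorb: "holds f eq_premonad_unit_absorb"
  by (rule holds_by_script[OF typed_f,
        where xs = "[fwd eq_Theta_from_psi_nu, fwd eq_Theta_from_psi_nu, bwd eq_psi_mu,
                     fwd eq_nu_ext_unit_left]"
          and ys = "[fwd eq_Theta_from_psi_nu, bwd eq_nu_normal, bwd eq_nu_compat,
                     (eq_mu_assoc, False, 1, Left_first)]"])
    (code_simp, simp add: Theta_from_psi_nu psi_mu nu_ext_unit_left nu_normal nu_compat mu_assoc)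

lemma premonad_mu: "holds f eq_premonad_mu"
  by (rule holds_by_script[OF typed_f,
        where xs = "[fwd eq_Theta_from_psi_nu, bwd eq_mu_assoc]"
          and ys = "[fwd eq_Theta_from_psi_nu]"])
    (code_simp, simp add: Theta_from_psi_nu mu_assoc)

lemma Theta_eta: "holds f eq_Theta_eta"
  by (rule holds_by_script[OF typed_f,
        where xs = "[fwd eq_Theta_from_psi_nu, fwd eq_Theta_mu]"
          and ys = "[fwd eq_Theta_from_psi_nu, fwd eq_mu_assoc, bwd eq_nu_normal, bwd eq_nu_compat]"])
    (code_simp, simp add: Theta_from_psi_nu Theta_mu mu_assoc nu_normal nu_compat)

lemma psi_from_Theta: "holds f eq_psi_from_Theta"
  by (rule holds_by_script[OF typed_f,
        where xs = "[bwd eq_psi_normal, bwd_rf eq_nu_ext_unit_left]"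
          and ys = "[fwd eq_Theta_from_psi_nu, fwd_rf eq_Theta_mu, fwd eq_mu_unit_right]"])
    (code_simp, simp add: psi_normal nu_ext_unit_left Theta_from_psi_nu Theta_mu mu_unit_right)

lemma nu_from_Theta: "holds f eq_nu_from_Theta"
  by (rule holds_by_script[OF typed_f,
        where xs = "[bwd eq_nu_normal, bwd eq_nu_compat]"
          and ys = "[bwd eq_Theta_eta, fwd eq_mu_unit_right, fwd eq_Theta_from_psi_nu,
                     fwd eq_mu_unit_right]"])
    (code_simp, simp add: nu_normal nu_compat Theta_eta mu_unit_right Theta_from_psi_nu)

end

locale premonad_diagram = monad_diagram +
  assumes premonad_assoc: "holds f eq_premonad_assoc"
    and premonad_unit_comm: "holds f eq_premonad_unit_comm"
    and premonad_unit_unit: "holds f eq_premonad_unit_unit"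
    and premonad_unit_absorb: "holds f eq_premonad_unit_absorb"
    and premonad_mu: "holds f eq_premonad_mu"
    and psi_from_Theta: "holds f eq_psi_from_Theta"
    and nu_from_Theta: "holds f eq_nu_from_Theta"
begin

lemma Theta_unit_Theta: "holds f eq_Theta_unit_Theta"
  by (rule holds_by_script[OF typed_f,
        where xs = "[bwd eq_premonad_assoc]"
          and ys = "[bwd eq_premonad_unit_absorb]"])
    (code_simp, simp add: premonad_assoc premonad_unit_absorb)

lemma Theta_vartheta_ext: "holds f eq_Theta_vartheta_ext"
  by (rule holds_by_script[OF typed_f,
        where xs = "[bwd eq_premonad_unit_comm]"
          and ys = "[bwd eq_premonad_unit_unit, bwd eq_premonad_mu]"])
    (code_simp, simp add: premonad_unit_comm premonad_unit_unit premonad_mu)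

lemma Theta_eta_vartheta: "holds f eq_Theta_eta_vartheta"
  by (rule holds_by_script[OF typed_f,
        where xs = "[fwd eq_premonad_mu, bwd eq_premonad_unit_comm, bwd eq_premonad_mu,
                     fwd eq_mu_unit_left]"
          and ys = "[]"])
    (code_simp, simp add: premonad_mu premonad_unit_comm mu_unit_left)

lemma psi_mu: "holds f eq_psi_mu"
  by (rule holds_by_script[OF typed_f,
        where xs = "[fwd eq_psi_from_Theta, fwd eq_psi_from_Theta, bwd eq_premonad_mu,
                     fwd eq_mu_unit_left]"
          and ys = "[fwd eq_psi_from_Theta, bwd eq_mu_assoc, bwd eq_Theta_vartheta_ext,
                     bwd eq_premonad_mu, fwd_rf eq_premonad_assoc]"])
    (code_simp, simp add: psi_from_Theta premonad_mu mu_unit_left mu_assoc Theta_vartheta_ext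
      premonad_assoc)

lemma nu_compat: "holds f eq_nu_compat"
  by (rule holds_by_script[OF typed_f,
        where xs = "[fwd eq_nu_from_Theta, bwd eq_premonad_mu, fwd eq_mu_unit_left,
                     fwd eq_psi_from_Theta, bwd eq_premonad_assoc, fwd eq_Theta_eta_vartheta,
                     fwd eq_psi_from_Theta, fwd_rf eq_Theta_unit_Theta]"
          and ys = "[fwd eq_psi_from_Theta, bwd eq_premonad_mu, fwd eq_mu_unit_left,
                     fwd eq_nu_from_Theta, bwd eq_premonad_assoc]"])
    (code_simp, simp add: nu_from_Theta premonad_mu mu_unit_left psi_from_Theta premonad_assoc
      Theta_eta_vartheta Theta_unit_Theta)

lemma nu_normal: "holds f eq_nu_normal"
  by (rule holds_by_script[OF typed_f,
        where xs = "[fwd eq_psi_from_Theta, bwd eq_premonad_mu, fwd eq_mu_unit_left,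
                     fwd eq_mu_unit_right, fwd eq_nu_from_Theta, fwd_rf eq_Theta_unit_Theta]"
          and ys = "[fwd eq_nu_from_Theta]"])
    (code_simp, simp add: psi_from_Theta premonad_mu mu_unit_left mu_unit_right nu_from_Theta
      Theta_unit_Theta)

lemma vartheta_compat: "holds f eq_vartheta_compat"
  by (rule holds_by_script[OF typed_f,
        where xs = "[fwd eq_psi_from_Theta, bwd eq_premonad_mu, fwd eq_mu_unit_left]"
          and ys = "[bwd eq_Theta_vartheta_ext]"])
    (code_simp, simp add: psi_from_Theta premonad_mu mu_unit_left Theta_vartheta_ext)

lemma vartheta_normal: "holds f eq_vartheta_normal"
  by (rule holds_by_script[OF typed_f,
        where xs = "[fwd eq_psi_from_Theta, fwd eq_mu_unit_right, bwd eq_premonad_mu,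
                     fwd eq_mu_unit_left]"
          and ys = "[bwd eq_premonad_unit_unit]"])
    (code_simp, simp add: psi_from_Theta mu_unit_right premonad_mu mu_unit_left premonad_unit_unit)

lemma Theta_from_psi_nu: "holds f eq_Theta_from_psi_nu"
  by (rule holds_by_script[OF typed_f,
        where xs = "[bwd eq_premonad_unit_absorb, bwd eq_Theta_eta_vartheta]"
          and ys = "[fwd eq_nu_from_Theta, fwd eq_psi_from_Theta, bwd eq_premonad_mu,
                     fwd eq_mu_unit_left, bwd eq_premonad_assoc, bwd eq_premonad_mu,
                     fwd eq_mu_unit_left]"])
    (code_simp, simp add: premonad_unit_absorb Theta_eta_vartheta nu_from_Theta psi_from_Theta
      premonad_mu mu_unit_left premonad_assoc)

lemma nu_ext_assoc: "holds f eq_nu_ext_assoc"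
  by (rule holds_by_script[OF typed_f,
        where xs = "[fwd eq_nu_from_Theta, bwd eq_premonad_mu, fwd eq_mu_unit_left,
                     fwd eq_psi_from_Theta, bwd eq_premonad_assoc, fwd eq_Theta_eta_vartheta,
                     fwd eq_nu_from_Theta, fwd_rf eq_Theta_unit_Theta]"
          and ys = "[fwd eq_nu_from_Theta, bwd eq_premonad_mu, fwd eq_mu_unit_left,
                     fwd eq_nu_from_Theta, bwd eq_premonad_assoc]"])
    (code_simp, simp add: nu_from_Theta premonad_mu mu_unit_left psi_from_Theta premonad_assoc
      Theta_eta_vartheta Theta_unit_Theta)

lemma nu_ext_unit_left: "holds f eq_nu_ext_unit_left"
  by (rule holds_by_script[OF typed_f,
        where xs = "[fwd eq_nu_from_Theta, bwd eq_premonad_mu, fwd eq_mu_unit_left,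
                     fwd eq_psi_from_Theta, bwd eq_premonad_assoc, fwd eq_Theta_eta_vartheta,
                     fwd eq_premonad_unit_unit]"
          and ys = "[fwd eq_psi_from_Theta, fwd eq_mu_unit_right]"])
    (code_simp, simp add: nu_from_Theta premonad_mu mu_unit_left psi_from_Theta premonad_assoc
      Theta_eta_vartheta premonad_unit_unit mu_unit_right)

lemma nu_ext_unit_right: "holds f eq_nu_ext_unit_right"
  by (rule holds_by_script[OF typed_f,
        where xs = "[fwd eq_nu_from_Theta, bwd eq_premonad_mu, fwd eq_mu_unit_left,
                     bwd eq_premonad_unit_comm]"
          and ys = "[fwd eq_psi_from_Theta, fwd eq_mu_unit_right]"])
    (code_simp, simp add: nu_from_Theta premonad_mu mu_unit_left premonad_unit_comm psi_from_Theta
      mu_unit_right)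

sublocale em: em_cell_diagram
  by unfold_locales (fact psi_mu nu_compat nu_normal vartheta_compat vartheta_normal)+

lemma em_assoc: "holds f eq_em_assoc"
  using nu_ext_assoc em.em_assoc_iff by simp

lemma em_unit_left: "holds f eq_em_unit_left"
  using nu_ext_unit_left em.em_unit_left_iff by simp

lemma em_unit_right: "holds f eq_em_unit_right"
  using nu_ext_unit_right em.em_unit_right_iff by simp

end

section \<open>Transfer to the 2-category\<close>

locale em_correspondence = diagram_semantics +
  fixes mu eta :: 'c
  assumes monad: "monad2 C k t mu eta"
begin

fun interp :: "'c \<Rightarrow> 'c \<Rightarrow> 'c \<Rightarrow> 'c \<Rightarrow> gen \<Rightarrow> 'c" where
  "interp psi nu vth Th Mu = mu" | "interp psi nu vth Th Eta = eta"
| "interp psi nu vth Th Psi = psi" | "interp psi nu vth Th Nu = nu"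
| "interp psi nu vth Th Vartheta = vth" | "interp psi nu vth Th Theta = Th"

definition Theta_of :: "'c \<Rightarrow> 'c \<Rightarrow> 'c" where
  "Theta_of psi nu = V2 C (H2 C (I2 C s) mu) (V2 C (H2 C (H2 C (I2 C s) mu) (I2 C t))
      (V2 C (H2 C nu (I2 C (Cp C t t))) (H2 C (H2 C (I2 C s) psi) (I2 C t))))"

definition psi_of :: "'c \<Rightarrow> 'c \<Rightarrow> 'c" where
  "psi_of Th vth = V2 C Th (H2 C (V2 C (H2 C (I2 C s) mu) (H2 C vth (I2 C t))) (H2 C (I2 C s) eta))"

definition nu_of :: "'c \<Rightarrow> 'c" where
  "nu_of Th = V2 C Th (H2 C (H2 C (I2 C s) eta) (H2 C (I2 C s) eta))"

lemma comp_s_id: "Cp C s (I1 C k) = s" and comp_t_id: "Cp C t (I1 C k) = t"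
  by (simp_all add: comp_id_right s_End t_End)

lemmas eval_simps = eval_term.simps word.simps letter_cell.simps interp.simps append.simps
  comp_s_id comp_t_id comp_assoc s_End t_End comp_in_End id_in_End

lemma mu_cell: "mu \<in> Cl C (Cp C t t) t" and eta_cell: "eta \<in> Cl C (I1 C k) t"
  using monad unfolding monad2_def by auto

lemma typed_interp:
  assumes "psi \<in> Cl C (Cp C t s) (Cp C s t)" "nu \<in> Cl C (Cp C s s) (Cp C s t)"
    "vth \<in> Cl C (I1 C k) (Cp C s t)" "Th \<in> Cl C (Cp C s (Cp C t (Cp C s t))) (Cp C s t)"
  shows "typed (interp psi nu vth Th)"
  unfolding typed_def
proof
  fix g
  show "interp psi nu vth Th g \<in> Cl C (word (gen_dom g)) (word (gen_cod g))"
    using assms mu_cell eta_cell by (cases g) (simp_all add: comp_s_id comp_t_id)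
qed

lemma monad_diagram_interp:
  assumes "typed (interp psi nu vth Th)"
  shows "monad_diagram C k s t (interp psi nu vth Th)"
proof unfold_locales
  show "typed (interp psi nu vth Th)" by (fact assms)
qed (use monad in \<open>simp_all add: monad2_def holds_def eqn_wf_def eq_mu_assoc_def
       eq_mu_unit_left_def eq_mu_unit_right_def eval_simps\<close>)

lemma em_monads_iff:
  "(psi, nu, vth) \<in> em_monads C k t mu eta s \<longleftrightarrow>
    psi \<in> Cl C (Cp C t s) (Cp C s t) \<and> nu \<in> Cl C (Cp C s s) (Cp C s t) \<and> vth \<in> Cl C (I1 C k) (Cp C s t) \<and>
    holds (interp psi nu vth Th) eq_psi_mu \<and> holds (interp psi nu vth Th) eq_nu_compat \<and>
    holds (interp psi nu vth Th) eq_nu_normal \<and> holds (interp psi nu vth Th) eq_vartheta_compat \<and>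
    holds (interp psi nu vth Th) eq_vartheta_normal \<and> holds (interp psi nu vth Th) eq_em_assoc \<and>
    holds (interp psi nu vth Th) eq_em_unit_left \<and> holds (interp psi nu vth Th) eq_em_unit_right"
  unfolding em_monads_def Let_def em_1cell_def em_2cell_def em_vcomp2_def em_hcomp2_def em_id2_def
    em_comp1_def holds_def eqn_wf_def eq_psi_mu_def eq_nu_compat_def eq_nu_normal_def
    eq_vartheta_compat_def eq_vartheta_normal_def eq_em_assoc_def eq_em_unit_left_def eq_em_unit_right_def
  by (auto simp: s_End eval_simps)

lemma st_premonads_iff:
  "(Th, vth) \<in> st_premonads C k t mu s \<longleftrightarrow>
    Th \<in> Cl C (Cp C s (Cp C t (Cp C s t))) (Cp C s t) \<and> vth \<in> Cl C (I1 C k) (Cp C s t) \<and>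
    holds (interp psi nu vth Th) eq_premonad_assoc \<and> holds (interp psi nu vth Th) eq_premonad_unit_comm \<and>
    holds (interp psi nu vth Th) eq_premonad_unit_unit \<and> holds (interp psi nu vth Th) eq_premonad_unit_absorb \<and>
    holds (interp psi nu vth Th) eq_premonad_mu"
  unfolding st_premonads_def pre_monad_def holds_def eqn_wf_def eq_premonad_assoc_def
    eq_premonad_unit_comm_def eq_premonad_unit_unit_def eq_premonad_unit_absorb_def eq_premonad_mu_def
  by (auto simp: eval_simps)

lemma holds_Theta_from_psi_nu_iff:
  "holds (interp psi nu vth Th) eq_Theta_from_psi_nu \<longleftrightarrow> Th = Theta_of psi nu"
  by (simp add: holds_def eqn_wf_def eq_Theta_from_psi_nu_def Theta_of_def eval_simps)

lemma holds_psi_from_Theta_iff: "holds (interp psi nu vth Th) eq_psi_from_Theta \<longleftrightarrow> psi = psi_of Th vth"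
  by (simp add: holds_def eqn_wf_def eq_psi_from_Theta_def psi_of_def eval_simps)

lemma holds_nu_from_Theta_iff: "holds (interp psi nu vth Th) eq_nu_from_Theta \<longleftrightarrow> nu = nu_of Th"
  by (simp add: holds_def eqn_wf_def eq_nu_from_Theta_def nu_of_def eval_simps)

lemma Theta_of_cell:
  assumes "psi \<in> Cl C (Cp C t s) (Cp C s t)" "nu \<in> Cl C (Cp C s s) (Cp C s t)"
  shows "Theta_of psi nu \<in> Cl C (Cp C s (Cp C t (Cp C s t))) (Cp C s t)"
proof -
  have "eval_term (interp psi nu vth Th) Theta_psi_nu \<in> Cl C (word [S, T, S, T]) (word [S, T])" for vth Th
    using eval_term_cell[of Theta_psi_nu "interp psi nu vth Th"] assms mu_cell by (simp add: comp_s_id comp_t_id)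
  then show ?thesis by (simp add: Theta_of_def eval_simps)
qed

lemma psi_of_cell:
  assumes "Th \<in> Cl C (Cp C s (Cp C t (Cp C s t))) (Cp C s t)" "vth \<in> Cl C (I1 C k) (Cp C s t)"
  shows "psi_of Th vth \<in> Cl C (Cp C t s) (Cp C s t)"
proof -
  have "eval_term (interp psi nu vth Th) (snd eq_psi_from_Theta) \<in> Cl C (word [T, S]) (word [S, T])" for psi nu
    using eval_term_cell[of "snd eq_psi_from_Theta" "interp psi nu vth Th"] assms mu_cell eta_cell
    by (simp add: eq_psi_from_Theta_def comp_s_id comp_t_id)
  then show ?thesis by (simp add: psi_of_def eq_psi_from_Theta_def eval_simps)
qed

lemma nu_of_cell:
  assumes "Th \<in> Cl C (Cp C s (Cp C t (Cp C s t))) (Cp C s t)"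
  shows "nu_of Th \<in> Cl C (Cp C s s) (Cp C s t)"
proof -
  have "eval_term (interp psi nu vth Th) (snd eq_nu_from_Theta) \<in> Cl C (word [S, S]) (word [S, T])" for psi nu vth
    using eval_term_cell[of "snd eq_nu_from_Theta" "interp psi nu vth Th"] assms eta_cell
    by (simp add: eq_nu_from_Theta_def comp_s_id comp_t_id)
  then show ?thesis by (simp add: nu_of_def eq_nu_from_Theta_def eval_simps)
qed

lemma em_monad_to_premonad:
  assumes "(psi, nu, vth) \<in> em_monads C k t mu eta s"
  shows "(Theta_of psi nu, vth) \<in> st_premonads C k t mu s \<and>
    psi_of (Theta_of psi nu) vth = psi \<and> nu_of (Theta_of psi nu) = nu"
proof -
  let ?f = "interp psi nu vth (Theta_of psi nu)"
  note em = assms[unfolded em_monads_iff[where Th = "Theta_of psi nu"]]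
  have "typed ?f" using em Theta_of_cell typed_interp by blast
  then interpret em_monad_diagram C k s t ?f
    using monad_diagram_interp em holds_Theta_from_psi_nu_iff
    by (simp add: em_monad_diagram_def em_cell_diagram_def em_monad_diagram_axioms_def em_cell_diagram_axioms_def)
  show ?thesis
    using em Theta_of_cell st_premonads_iff premonad_assoc premonad_unit_comm premonad_unit_unit
      premonad_unit_absorb premonad_mu psi_from_Theta nu_from_Theta
      holds_psi_from_Theta_iff holds_nu_from_Theta_iff
    by metis
qed

lemma premonad_to_em_monad:
  assumes "(Th, vth) \<in> st_premonads C k t mu s"
  shows "(psi_of Th vth, nu_of Th, vth) \<in> em_monads C k t mu eta s \<and> Theta_of (psi_of Th vth) (nu_of Th) = Th"
proof -
  let ?f = "interp (psi_of Th vth) (nu_of Th) vth Th"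
  note pm = assms[unfolded st_premonads_iff[where psi = "psi_of Th vth" and nu = "nu_of Th"]]
  have "typed ?f" using pm psi_of_cell nu_of_cell typed_interp by blast
  then interpret premonad_diagram C k s t ?f
    using monad_diagram_interp pm holds_psi_from_Theta_iff holds_nu_from_Theta_iff
    by (simp add: premonad_diagram_def premonad_diagram_axioms_def)
  show ?thesis
    using pm psi_of_cell nu_of_cell em_monads_iff em.psi_mu em.nu_compat em.nu_normal em.vartheta_compat
      em.vartheta_normal em_assoc em_unit_left em_unit_right Theta_from_psi_nu holds_Theta_from_psi_nu_iff
    by metis
qed

end

theorem theorem2p3:
  fixes C :: "('o, 'a, 'c) twocat" and k :: 'o and t s :: 'a and mu eta :: 'c
  assumes "two_category C"
    and "monad2 C k t mu eta"
    and "s \<in> Hom C k k"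
  shows "\<exists>F. bij_betw F (em_monads C k t mu eta s) (st_premonads C k t mu s) \<and>
             (\<forall>x \<in> em_monads C k t mu eta s. snd (F x) = snd (snd x))"
proof -
  interpret em_correspondence C k s t mu eta
    using assms by unfold_locales (auto simp: monad2_def)
  let ?F = "\<lambda>(psi, nu, vth). (Theta_of psi nu, vth)"
  let ?G = "\<lambda>(Th, vth). (psi_of Th vth, nu_of Th, vth)"
  have "bij_betw ?F (em_monads C k t mu eta s) (st_premonads C k t mu s)"
    by (rule bij_betw_byWitness[where f' = ?G]) (auto dest: em_monad_to_premonad premonad_to_em_monad)
  then show ?thesis by force
qed

end
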